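(* Under the setting and assumptions in the context, $$\frac1n\mathbf A^\top\mathbf A-\frac1n\mathbf B^\top\mathbf B=\sigma^2\,\frac1n\mathbf G^\top\mathbf G+O_p\!\left(\tfrac1{\sqrt n}\right),\qquad \frac1n\mathbf A^\top\mathbf b-\frac1n\mathbf B^\top\mathbf b=\sigma^2\,\frac1n\mathbf G^\top\mathbf 1_{2n\times1}+O_p\!\left(\tfrac1{\sqrt n}\right),$$ and consequently $\hat{\boldsymbol\theta}_n^{\rm BE}=\hat{\boldsymbol\theta}_n^{\rm UB}+O_p(1/\sqrt n)$, so that $\hat{\boldsymbol\theta}_n^{\rm BE}-\boldsymbol\theta^o=O_p(1/\sqrt n)$.
   Context: Camera model. Known intrinsics $f_x,f_y>0$; true rotation $\mathbf R\in SO(3)$ with rows $\mathbf r_1^\top,\mathbf r_2^\top,\mathbf r_3^\top$ and translation $\mathbf t=[t_1,t_2,t_3]^\top$. Let $\mathbf W=\mathrm{diag}(f_x,f_y)$, $\mathbf e_i$ the $i$-th standard unit vector of $\mathbb R^3$, $\mathbf E=[\mathbf e_1~\mathbf e_2]^\top$. For known 3D points $\mathbf p_i^w$ ($i=1,\dots,n$) with $\mathbf e_3^\top(\mathbf R\mathbf p_i^w+\mathbf t)>0$, observations are $\mathbf q_i'=[u_i~v_i]^\top=\mathbf q_i^o+\boldsymbol\epsilon_i$, with $\mathbf q_i^o=[u_i^o~v_i^o]^\top=\frac{\mathbf W\mathbf E(\mathbf R\mathbf p_i^w+\mathbf t)}{\mathbf e_3^\top(\mathbf R\mathbf p_i^w+\mathbf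 t)}$ and $\boldsymbol\epsilon_i=[\epsilon_{i1},\epsilon_{i2}]^\top$. Assumption 1: $\boldsymbol\epsilon_i\sim\mathcal N(0,\sigma^2\mathbf I_2)$ i.i.d., $\sigma^2<\infty$ unknown. Assumption 2: the points do not concentrate on a critical set for camera resectioning (Hartley–Zisserman Result 22.5); moreover the points are bounded, their empirical distribution converges, and $\frac1n\mathbf B^\top\mathbf B$ converges to a nonsingular constant matrix. Let $\bar{\mathbf p}^w=\frac1n\sum_i\mathbf p_i^w$, $\alpha$ defined by $\alpha\sum_{i=1}^n\mathbf e_3^\top(\mathbf R\mathbf p_i^w+\mathbf t)=n$, and $\boldsymbol\theta^o=\alpha[\mathbf r_3^\top~\mathbf r_1^\top~t_1~\mathbf r_2^\top~t_2]^\top$. $\mathbf b=[\mathbf q_1'^\top\cdots\mathbf q_n'^\top]^\top$. $\mathbf A\in\mathbb R^{2n\times11}$ has, for each $i$, rows $[-u_i(\mathbf p_i^w-\bar{\mathbf p}^w)^\top,~f_x(\mathbf p_i^w)^\top,~f_x,~\mathbf 0_{1\times4}]$ and $[-v_i(\mathbf p_i^w-\bar{\mathbf p}^w)^\top,~\mathbf 0_{1\times4},~f_y(\mathbf p_i^w)^\top,~f_y]$; $\mathbf B$ is the same with $u_i,v_i$ replaced by $u_i^o,v_i^o$. $\mathbf G\in\mathbb R^{2n\times11}$ has, for each $i$, two identical rows $[-(\mathbf p_i^w-\bar{\mathbf p}^w)^\top,~\mathbf 0_{1\times8}]$; $\mathbf 1_{2n\times1}$ is the all-ones vector. $\hat{\boldsymbol\theta}_n^{\rm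 UB}=(\mathbf B^\top\mathbf B)^{-1}\mathbf B^\top\mathbf b$ and $\hat{\boldsymbol\theta}_n^{\rm BE}=(\mathbf A^\top\mathbf A-\hat\sigma^2\mathbf G^\top\mathbf G)^{-1}(\mathbf A^\top\mathbf b-\hat\sigma^2\mathbf G^\top\mathbf 1_{2n\times1})$, where $\hat\sigma^2$ is any estimate of $\sigma^2$ with $\sqrt n(\hat\sigma^2-\sigma^2)=O_p(1)$ (e.g. the smallest root of $\lambda\mapsto\det(\boldsymbol\Phi-\lambda\boldsymbol\Delta)$ with $\boldsymbol\Phi=\frac1n\begin{bmatrix}\mathbf A^\top\mathbf A&\mathbf A^\top\mathbf b\\ \mathbf b^\top\mathbf A&\mathbf b^\top\mathbf b\end{bmatrix}$, $\boldsymbol\Delta=\frac1n\begin{bmatrix}\mathbf G^\top\mathbf G&\mathbf G^\top\mathbf 1\\ \mathbf 1^\top\mathbf G&2n\end{bmatrix}$). *)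

theory Defs
  imports "HOL-Probability.Probability"
begin

definition Op :: "'w measure \<Rightarrow> (nat \<Rightarrow> 'w \<Rightarrow> real) \<Rightarrow> (nat \<Rightarrow> real) \<Rightarrow> bool" where
  "Op M X a \<longleftrightarrow> (\<forall>e>0. \<exists>K N. \<forall>n\<ge>N. \<exists>S\<in>sets M.
      {w \<in> space M. X n w > K * a n} \<subseteq> S \<and> measure M S < e)"

text \<open>Components of real^11 are indexed 0..10 via the representation of the numeral type.\<close>
definition idx11 :: "11 \<Rightarrow> nat" where
  "idx11 i = nat (Rep_bit1 i)"

definition vec11 :: "real list \<Rightarrow> real^11" where
  "vec11 xs = (\<chi> i. xs ! idx11 i)"

definition v3list :: "real^3 \<Rightarrow> real list" where
  "v3list x = [x$1, x$2, x$3]"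

definition outer11 :: "real^11 \<Rightarrow> real^11^11" where
  "outer11 a = (\<chi> i j. a$i * a$j)"

definition depth :: "real^3^3 \<Rightarrow> real^3 \<Rightarrow> real^3 \<Rightarrow> real" where
  "depth R t p = (R *v p + t) $ 3"

definition uo :: "real \<Rightarrow> real^3^3 \<Rightarrow> real^3 \<Rightarrow> real^3 \<Rightarrow> real" where
  "uo fx R t p = fx * (R *v p + t) $ 1 / depth R t p"

definition vo :: "real \<Rightarrow> real^3^3 \<Rightarrow> real^3 \<Rightarrow> real^3 \<Rightarrow> real" where
  "vo fy R t p = fy * (R *v p + t) $ 2 / depth R t p"

definition pbar :: "(nat \<Rightarrow> real^3) \<Rightarrow> nat \<Rightarrow> real^3" where
  "pbar p n = (1 / real n) *\<^sub>R (\<Sum>i<n. p i)"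

text \<open>The two rows of A (or of B) belonging to point p, with image coordinates u, v.\<close>
definition rowU :: "real \<Rightarrow> real^3 \<Rightarrow> real^3 \<Rightarrow> real \<Rightarrow> real^11" where
  "rowU fx pb p u = vec11 (v3list (- u *\<^sub>R (p - pb)) @ v3list (fx *\<^sub>R p) @ [fx] @ [0,0,0,0])"

definition rowV :: "real \<Rightarrow> real^3 \<Rightarrow> real^3 \<Rightarrow> real \<Rightarrow> real^11" where
  "rowV fy pb p v = vec11 (v3list (- v *\<^sub>R (p - pb)) @ [0,0,0,0] @ v3list (fy *\<^sub>R p) @ [fy])"

text \<open>Each of the two (identical) rows of G belonging to point p.\<close>
definition rowG :: "real^3 \<Rightarrow> real^3 \<Rightarrow> real^11" where
  "rowG pb p = vec11 (v3list (- (p - pb)) @ [0,0,0,0,0,0,0,0])"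

text \<open>Gram matrices / cross products for sample size n, written as sums over the rows:
  M^T M = sum_k m_k m_k^T, M^T y = sum_k y_k m_k.  U, V are the image coordinates used in
  the matrix (observed ones for A, noise-free ones for B); bu, bv the entries of b.\<close>
definition gram :: "real \<Rightarrow> real \<Rightarrow> (nat \<Rightarrow> real^3) \<Rightarrow> (nat \<Rightarrow> real) \<Rightarrow> (nat \<Rightarrow> real) \<Rightarrow> nat \<Rightarrow> real^11^11" where
  "gram fx fy p U V n = (\<Sum>i<n. outer11 (rowU fx (pbar p n) (p i) (U i))
                              + outer11 (rowV fy (pbar p n) (p i) (V i)))"

definition cross :: "real \<Rightarrow> real \<Rightarrow> (nat \<Rightarrow> real^3) \<Rightarrow> (nat \<Rightarrow> real) \<Rightarrow> (nat \<Rightarrow> real)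
    \<Rightarrow> (nat \<Rightarrow> real) \<Rightarrow> (nat \<Rightarrow> real) \<Rightarrow> nat \<Rightarrow> real^11" where
  "cross fx fy p U V bu bv n = (\<Sum>i<n. bu i *\<^sub>R rowU fx (pbar p n) (p i) (U i)
                                     + bv i *\<^sub>R rowV fy (pbar p n) (p i) (V i))"

definition GtG :: "(nat \<Rightarrow> real^3) \<Rightarrow> nat \<Rightarrow> real^11^11" where
  "GtG p n = (\<Sum>i<n. 2 *\<^sub>R outer11 (rowG (pbar p n) (p i)))"

definition Gt1 :: "(nat \<Rightarrow> real^3) \<Rightarrow> nat \<Rightarrow> real^11" where
  "Gt1 p n = (\<Sum>i<n. 2 *\<^sub>R rowG (pbar p n) (p i))"

definition alpha :: "real^3^3 \<Rightarrow> real^3 \<Rightarrow> (nat \<Rightarrow> real^3) \<Rightarrow> nat \<Rightarrow> real" where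
  "alpha R t p n = real n / (\<Sum>i<n. depth R t (p i))"

definition theta_o :: "real^3^3 \<Rightarrow> real^3 \<Rightarrow> (nat \<Rightarrow> real^3) \<Rightarrow> nat \<Rightarrow> real^11" where
  "theta_o R t p n = alpha R t p n *\<^sub>R
     vec11 (v3list (R$3) @ v3list (R$1) @ [t$1] @ v3list (R$2) @ [t$2])"


text \<open>Observed image coordinates u_i = u_i^o + eps_i1, v_i = v_i^o + eps_i2
  (noise components indexed 0 and 1).\<close>
definition uobs :: "real \<Rightarrow> real^3^3 \<Rightarrow> real^3 \<Rightarrow> (nat \<Rightarrow> real^3) \<Rightarrow> (nat \<Rightarrow> nat \<Rightarrow> 'w \<Rightarrow> real) \<Rightarrow> 'w \<Rightarrow> nat \<Rightarrow> real" where
  "uobs fx R t p eps w i = uo fx R t (p i) + eps i 0 w"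

definition vobs :: "real \<Rightarrow> real^3^3 \<Rightarrow> real^3 \<Rightarrow> (nat \<Rightarrow> real^3) \<Rightarrow> (nat \<Rightarrow> nat \<Rightarrow> 'w \<Rightarrow> real) \<Rightarrow> 'w \<Rightarrow> nat \<Rightarrow> real" where
  "vobs fy R t p eps w i = vo fy R t (p i) + eps i 1 w"

definition AtA where
  "AtA fx fy R t p eps n w = gram fx fy p (uobs fx R t p eps w) (vobs fy R t p eps w) n"

definition Atb where
  "Atb fx fy R t p eps n w = cross fx fy p (uobs fx R t p eps w) (vobs fy R t p eps w)
                                          (uobs fx R t p eps w) (vobs fy R t p eps w) n"

definition BtB where
  "BtB fx fy R t p n = gram fx fy p (\<lambda>i. uo fx R t (p i)) (\<lambda>i. vo fy R t (p i)) n"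

definition Btb where
  "Btb fx fy R t p eps n w = cross fx fy p (\<lambda>i. uo fx R t (p i)) (\<lambda>i. vo fy R t (p i))
                                          (uobs fx R t p eps w) (vobs fy R t p eps w) n"

text \<open>theta^UB_n = (B^T B)^{-1} B^T b and
  theta^BE_n = (A^T A - s2 G^T G)^{-1} (A^T b - s2 G^T 1); matrix_inv is the library inverse
  (an arbitrary/zero-like value when the matrix is singular).\<close>
definition thetaUB where
  "thetaUB fx fy R t p eps n w = matrix_inv (BtB fx fy R t p n) *v Btb fx fy R t p eps n w"

definition thetaBE where
  "thetaBE fx fy R t p eps s2 n w =
     matrix_inv (AtA fx fy R t p eps n w - s2 n w *\<^sub>R GtG p n)
       *v (Atb fx fy R t p eps n w - s2 n w *\<^sub>R Gt1 p n)"

end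

theory Submission
  imports Defs
begin

text \<open>
  The rows of \<open>A\<close> are those of \<open>B\<close> plus \<open>\<epsilon>\<^sub>i\<^sub>j\<close> times the rows of \<open>G\<close>. Hence
  \<open>A\<^sup>T A - B\<^sup>T B - \<sigma>\<^sup>2 G\<^sup>T G\<close> and \<open>A\<^sup>T b - B\<^sup>T b - \<sigma>\<^sup>2 G\<^sup>T 1\<close> are sums over the points of
  terms linear in \<open>\<epsilon>\<^sub>i\<^sub>j\<close> and in \<open>\<epsilon>\<^sub>i\<^sub>j\<^sup>2 - \<sigma>\<^sup>2\<close>. These are independent and centred, and the
  convergence of \<open>B\<^sup>T B / n\<close> keeps the sums of the squared coefficients of order \<open>n\<close>, so a
  second-moment bound makes both differences \<open>O\<^sub>p(\<surd>n)\<close>.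

  Because \<open>\<theta>\<^sup>o\<close> fits the noise-free data exactly, \<open>B\<^sup>T B (\<theta>\<^sup>U\<^sup>B - \<theta>\<^sup>o)\<close> is a noise sum of the
  same kind. The invertible limit of \<open>B\<^sup>T B / n\<close> gives a uniform lower bound for
  \<open>B\<^sup>T B / n\<close>, which bounds \<open>\<theta>\<^sup>U\<^sup>B - \<theta>\<^sup>o\<close>; and since the two systems defining \<open>\<theta>\<^sup>B\<^sup>E\<close> and
  \<open>\<theta>\<^sup>U\<^sup>B\<close> differ by \<open>O\<^sub>p(1/\<surd>n)\<close> once \<open>\<surd>n (s2 - \<sigma>\<^sup>2) = O\<^sub>p(1)\<close>, a perturbation bound for
  linear systems controls \<open>\<theta>\<^sup>B\<^sup>E - \<theta>\<^sup>U\<^sup>B\<close>, given that \<open>\<theta>\<^sup>o\<close> stays bounded.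
\<close>

section \<open>Stochastic boundedness\<close>

definition eventually_prob_lt :: "'w measure \<Rightarrow> (nat \<Rightarrow> 'w set) \<Rightarrow> real \<Rightarrow> bool" where
  "eventually_prob_lt M E e \<longleftrightarrow> (\<forall>\<^sub>F n in sequentially. \<exists>S\<in>sets M. E n \<subseteq> S \<and> measure M S < e)"

lemma Op_iff_eventually_prob_lt:
  "Op M X a \<longleftrightarrow> (\<forall>e>0. \<exists>K. eventually_prob_lt M (\<lambda>n. {w \<in> space M. K * a n < X n w}) e)"
  unfolding Op_def eventually_prob_lt_def eventually_sequentially by blast

lemma eventually_prob_lt_mono:
  assumes "eventually_prob_lt M E e" "\<forall>\<^sub>F n in sequentially. E' n \<subseteq> E n"
  shows "eventually_prob_lt M E' e"
  using assms unfolding eventually_prob_lt_def by eventually_elim blast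

lemma eventually_prob_lt_Un:
  assumes "eventually_prob_lt M E e" "eventually_prob_lt M E' e'"
  shows "eventually_prob_lt M (\<lambda>n. E n \<union> E' n) (e + e')"
  using assms unfolding eventually_prob_lt_def
proof eventually_elim
  case (elim n)
  then obtain S S' where "S \<in> sets M" "E n \<subseteq> S" "measure M S < e"
    and "S' \<in> sets M" "E' n \<subseteq> S'" "measure M S' < e'" by blast
  then show ?case
    using measure_Un_le[of S M S'] by (intro bexI[of _ "S \<union> S'"]) auto
qed

lemma eventually_prob_lt_subset_Un:
  assumes "eventually_prob_lt M E (e / 2)" "eventually_prob_lt M E' (e / 2)"
    and "\<And>n. F n \<subseteq> E n \<union> E' n"
  shows "eventually_prob_lt M F e"
  using eventually_prob_lt_mono[OF eventually_prob_lt_Un[OF assms(1,2)]] assms(3) by simp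

lemma Op_nonneg_constant:
  assumes "Op M X a" "\<And>n. 0 \<le> a n" "e > 0"
  obtains K where "0 \<le> K" "eventually_prob_lt M (\<lambda>n. {w \<in> space M. K * a n < X n w}) e"
proof -
  obtain K where K: "eventually_prob_lt M (\<lambda>n. {w \<in> space M. K * a n < X n w}) e"
    using assms(1,3) unfolding Op_iff_eventually_prob_lt by blast
  have "K * a n \<le> max K 0 * a n" for n
    by (intro mult_right_mono assms(2)) simp
  then have "{w \<in> space M. max K 0 * a n < X n w} \<subseteq> {w \<in> space M. K * a n < X n w}" for n
    by (auto intro: le_less_trans)
  with K have "eventually_prob_lt M (\<lambda>n. {w \<in> space M. max K 0 * a n < X n w}) e"
    by (simp add: eventually_prob_lt_mono)
  then show thesis by (intro that[of "max K 0"]) auto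
qed

lemma Op_mono:
  assumes "Op M Y a" "\<And>n w. w \<in> space M \<Longrightarrow> X n w \<le> Y n w"
  shows "Op M X a"
  unfolding Op_iff_eventually_prob_lt
proof (intro allI impI)
  fix e :: real assume "e > 0"
  then obtain K where K: "eventually_prob_lt M (\<lambda>n. {w \<in> space M. K * a n < Y n w}) e"
    using assms(1) unfolding Op_iff_eventually_prob_lt by blast
  have "{w \<in> space M. K * a n < X n w} \<subseteq> {w \<in> space M. K * a n < Y n w}" for n
    using assms(2) by (auto intro: less_le_trans)
  with K have "eventually_prob_lt M (\<lambda>n. {w \<in> space M. K * a n < X n w}) e"
    by (simp add: eventually_prob_lt_mono)
  then show "\<exists>K. eventually_prob_lt M (\<lambda>n. {w \<in> space M. K * a n < X n w}) e" ..
qed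

lemma Op_bounded:
  assumes "\<And>n w. w \<in> space M \<Longrightarrow> X n w \<le> C * a n"
  shows "Op M X a"
  unfolding Op_iff_eventually_prob_lt eventually_prob_lt_def
proof (intro allI impI exI[of _ C] always_eventually allI)
  fix e :: real and n assume "e > 0"
  have "{w \<in> space M. C * a n < X n w} = {}"
    by (auto dest!: assms[of _ n])
  then show "\<exists>S\<in>sets M. {w \<in> space M. C * a n < X n w} \<subseteq> S \<and> measure M S < e"
    using \<open>e > 0\<close> by (intro bexI[of _ "{}"]) auto
qed

lemma Op_add:
  assumes "Op M X a" "Op M Y a"
  shows "Op M (\<lambda>n w. X n w + Y n w) a"
  unfolding Op_iff_eventually_prob_lt
proof (intro allI impI)
  fix e :: real assume "e > 0"
  then have "e / 2 > 0" by simp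
  then obtain K K' where K:
      "eventually_prob_lt M (\<lambda>n. {w \<in> space M. K * a n < X n w}) (e / 2)"
      "eventually_prob_lt M (\<lambda>n. {w \<in> space M. K' * a n < Y n w}) (e / 2)"
    using assms unfolding Op_iff_eventually_prob_lt by blast
  have sub: "{w \<in> space M. (K + K') * a n < X n w + Y n w}
      \<subseteq> {w \<in> space M. K * a n < X n w} \<union> {w \<in> space M. K' * a n < Y n w}" for n
    by (auto simp: distrib_right)
  have "eventually_prob_lt M (\<lambda>n. {w \<in> space M. (K + K') * a n < X n w + Y n w}) e"
    by (rule eventually_prob_lt_subset_Un[OF K sub])
  then show "\<exists>K. eventually_prob_lt M (\<lambda>n. {w \<in> space M. K * a n < X n w + Y n w}) e" ..
qed

lemma Op_sum:
  assumes "finite I" "\<And>i. i \<in> I \<Longrightarrow> Op M (X i) a"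
  shows "Op M (\<lambda>n w. \<Sum>i\<in>I. X i n w) a"
  using assms
proof (induction I rule: finite_induct)
  case empty
  show ?case by (simp add: Op_bounded[of _ _ 0])
next
  case (insert i I)
  then show ?case by (simp add: Op_add)
qed

lemma Op_cmult:
  assumes "Op M X a" "0 \<le> c"
  shows "Op M (\<lambda>n w. c * X n w) a"
  unfolding Op_iff_eventually_prob_lt
proof (intro allI impI)
  fix e :: real assume "e > 0"
  then obtain K where K: "eventually_prob_lt M (\<lambda>n. {w \<in> space M. K * a n < X n w}) e"
    using assms(1) unfolding Op_iff_eventually_prob_lt by blast
  have "{w \<in> space M. (c * K) * a n < c * X n w} \<subseteq> {w \<in> space M. K * a n < X n w}" for n
    using assms(2) mult_left_less_imp_less[of c "K * a n"] by (auto simp: mult.assoc)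
  with K have "eventually_prob_lt M (\<lambda>n. {w \<in> space M. (c * K) * a n < c * X n w}) e"
    by (simp add: eventually_prob_lt_mono)
  then show "\<exists>K. eventually_prob_lt M (\<lambda>n. {w \<in> space M. K * a n < c * X n w}) e" ..
qed

lemma Op_mult:
  assumes "Op M X (\<lambda>_. 1)" "Op M Y a" "\<And>n. 0 \<le> a n"
    and "\<And>n w. w \<in> space M \<Longrightarrow> 0 \<le> X n w" "\<And>n w. w \<in> space M \<Longrightarrow> 0 \<le> Y n w"
  shows "Op M (\<lambda>n w. X n w * Y n w) a"
  unfolding Op_iff_eventually_prob_lt
proof (intro allI impI)
  fix e :: real assume "e > 0"
  then have e2: "e / 2 > 0" by simp
  obtain K where K: "0 \<le> K" "eventually_prob_lt M (\<lambda>n. {w \<in> space M. K * 1 < X n w}) (e / 2)"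
    by (rule Op_nonneg_constant[OF assms(1) _ e2]) simp_all
  obtain K' where K': "eventually_prob_lt M (\<lambda>n. {w \<in> space M. K' * a n < Y n w}) (e / 2)"
    using assms(2) e2 unfolding Op_iff_eventually_prob_lt by blast
  have sub: "{w \<in> space M. (K * K') * a n < X n w * Y n w}
      \<subseteq> {w \<in> space M. K * 1 < X n w} \<union> {w \<in> space M. K' * a n < Y n w}" for n
  proof
    fix w assume w: "w \<in> {w \<in> space M. (K * K') * a n < X n w * Y n w}"
    show "w \<in> {w \<in> space M. K * 1 < X n w} \<union> {w \<in> space M. K' * a n < Y n w}"
    proof (rule ccontr)
      assume "w \<notin> {w \<in> space M. K * 1 < X n w} \<union> {w \<in> space M. K' * a n < Y n w}"
      then have "X n w \<le> K" "Y n w \<le> K' * a n" using w by auto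
      then have "X n w * Y n w \<le> K * (K' * a n)"
        using w assms(4,5) K(1) by (intro mult_mono) auto
      then show False using w by (simp add: mult.assoc)
    qed
  qed
  have "eventually_prob_lt M (\<lambda>n. {w \<in> space M. (K * K') * a n < X n w * Y n w}) e"
    by (rule eventually_prob_lt_subset_Un[OF K(2) K' sub])
  then show "\<exists>K. eventually_prob_lt M (\<lambda>n. {w \<in> space M. K * a n < X n w * Y n w}) e" ..
qed

lemma Op_rate_mono:
  assumes "Op M X a" "\<And>n. 0 \<le> a n" "\<forall>\<^sub>F n in sequentially. a n \<le> b n"
  shows "Op M X b"
  unfolding Op_iff_eventually_prob_lt
proof (intro allI impI)
  fix e :: real assume "e > 0"
  then obtain K where K: "0 \<le> K" "eventually_prob_lt M (\<lambda>n. {w \<in> space M. K * a n < X n w}) e"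
    using Op_nonneg_constant[OF assms(1,2)] by blast
  have "\<forall>\<^sub>F n in sequentially. {w \<in> space M. K * b n < X n w} \<subseteq> {w \<in> space M. K * a n < X n w}"
    using assms(3)
  proof eventually_elim
    case (elim n)
    then have "K * a n \<le> K * b n" using K(1) by (rule mult_left_mono)
    then show ?case by auto
  qed
  with K(2) have "eventually_prob_lt M (\<lambda>n. {w \<in> space M. K * b n < X n w}) e"
    by (rule eventually_prob_lt_mono)
  then show "\<exists>K. eventually_prob_lt M (\<lambda>n. {w \<in> space M. K * b n < X n w}) e" ..
qed

lemma Op_divide_rate:
  assumes "Op M (\<lambda>n w. c n * X n w) a" "\<forall>\<^sub>F n in sequentially. 0 < c n"
  shows "Op M X (\<lambda>n. a n / c n)"
  unfolding Op_iff_eventually_prob_lt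
proof (intro allI impI)
  fix e :: real assume "e > 0"
  then obtain K where K: "eventually_prob_lt M (\<lambda>n. {w \<in> space M. K * a n < c n * X n w}) e"
    using assms(1) unfolding Op_iff_eventually_prob_lt by blast
  have "\<forall>\<^sub>F n in sequentially.
      {w \<in> space M. K * (a n / c n) < X n w} \<subseteq> {w \<in> space M. K * a n < c n * X n w}"
    using assms(2) by eventually_elim (auto simp: divide_less_eq mult.commute)
  with K have "eventually_prob_lt M (\<lambda>n. {w \<in> space M. K * (a n / c n) < X n w}) e"
    by (rule eventually_prob_lt_mono)
  then show "\<exists>K. eventually_prob_lt M (\<lambda>n. {w \<in> space M. K * (a n / c n) < X n w}) e" ..
qed

lemma inverse_sqrt_tendsto_zero: "(\<lambda>n. 1 / sqrt (real n)) \<longlonglongrightarrow> 0"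
  using tendsto_real_sqrt[OF lim_inverse_n'] by (simp add: real_sqrt_divide)

lemma Op_imp_eventually_prob_gt:
  assumes "Op M X a" "a \<longlonglongrightarrow> 0" "0 < \<delta>" "0 < e"
  shows "eventually_prob_lt M (\<lambda>n. {w \<in> space M. \<delta> < X n w}) e"
proof -
  obtain K where K: "eventually_prob_lt M (\<lambda>n. {w \<in> space M. K * a n < X n w}) e"
    using assms(1,4) unfolding Op_iff_eventually_prob_lt by blast
  have "(\<lambda>n. K * a n) \<longlonglongrightarrow> 0"
    using tendsto_mult_right_zero[OF assms(2)] .
  then have "\<forall>\<^sub>F n in sequentially. K * a n < \<delta>"
    using assms(3) by (rule order_tendstoD)
  then have "\<forall>\<^sub>F n in sequentially. {w \<in> space M. \<delta> < X n w} \<subseteq> {w \<in> space M. K * a n < X n w}"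
    by eventually_elim auto
  with K show ?thesis
    by (rule eventually_prob_lt_mono)
qed

lemma Op_eventually_le:
  assumes "Op M Y a" "\<And>e. 0 < e \<Longrightarrow> eventually_prob_lt M (\<lambda>n. {w \<in> space M. Y n w < X n w}) e"
  shows "Op M X a"
  unfolding Op_iff_eventually_prob_lt
proof (intro allI impI)
  fix e :: real assume "e > 0"
  then have "e / 2 > 0" by simp
  then obtain K where K: "eventually_prob_lt M (\<lambda>n. {w \<in> space M. K * a n < Y n w}) (e / 2)"
    using assms(1) unfolding Op_iff_eventually_prob_lt by blast
  have sub: "{w \<in> space M. K * a n < X n w}
      \<subseteq> {w \<in> space M. K * a n < Y n w} \<union> {w \<in> space M. Y n w < X n w}" for n
    by auto
  have "eventually_prob_lt M (\<lambda>n. {w \<in> space M. K * a n < X n w}) e"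
    by (rule eventually_prob_lt_subset_Un[OF K assms(2) sub]) (use \<open>e > 0\<close> in simp)
  then show "\<exists>K. eventually_prob_lt M (\<lambda>n. {w \<in> space M. K * a n < X n w}) e" ..
qed

lemma Op_norm_vec:
  fixes X :: "nat \<Rightarrow> 'w \<Rightarrow> 'a::real_normed_vector^'n"
  assumes "\<And>k. Op M (\<lambda>n w. norm (X n w $ k)) a"
  shows "Op M (\<lambda>n w. norm (X n w)) a"
proof (rule Op_mono)
  show "Op M (\<lambda>n w. \<Sum>k\<in>UNIV. norm (X n w $ k)) a"
    by (rule Op_sum) (simp_all add: assms)
  show "norm (X n w) \<le> (\<Sum>k\<in>UNIV. norm (X n w $ k))" for n w
    unfolding norm_vec_def by (rule L2_set_le_sum) simp
qed

lemma Op_eventually_mono: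
  assumes "Op M Y a" "\<forall>\<^sub>F n in sequentially. \<forall>w\<in>space M. X n w \<le> Y n w"
  shows "Op M X a"
proof (rule Op_eventually_le[OF assms(1)])
  fix e :: real assume "0 < e"
  have sub: "\<forall>\<^sub>F n in sequentially. {w \<in> space M. Y n w < X n w} \<subseteq> {}"
    using assms(2) by eventually_elim auto
  have "eventually_prob_lt M (\<lambda>n. {}) e"
    unfolding eventually_prob_lt_def using \<open>0 < e\<close> by (auto intro!: always_eventually bexI[of _ "{}"])
  then show "eventually_prob_lt M (\<lambda>n. {w \<in> space M. Y n w < X n w}) e"
    using sub by (rule eventually_prob_lt_mono)
qed

lemma Op_le_on_small_event:
  assumes Y: "Op M Y a" and Z: "Op M Z b" "b \<longlonglongrightarrow> 0" and \<delta>: "0 < \<delta>"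
    and le: "\<forall>\<^sub>F n in sequentially. \<forall>w\<in>space M. Z n w \<le> \<delta> \<longrightarrow> X n w \<le> Y n w"
  shows "Op M X a"
proof (rule Op_eventually_le[OF Y])
  fix e :: real assume "0 < e"
  have "\<forall>\<^sub>F n in sequentially. {w \<in> space M. Y n w < X n w} \<subseteq> {w \<in> space M. \<delta> < Z n w}"
    using le by eventually_elim force
  then show "eventually_prob_lt M (\<lambda>n. {w \<in> space M. Y n w < X n w}) e"
    by (rule eventually_prob_lt_mono[OF Op_imp_eventually_prob_gt[OF Z \<delta> \<open>0 < e\<close>]])
qed

section \<open>Weighted sums of uncorrelated variables\<close>

context prob_space
begin

lemma second_moment_uncorrelated_sum:
  fixes \<xi> :: "nat \<Rightarrow> 'a \<Rightarrow> real"
  assumes "finite I"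
    and meas: "\<And>i. \<xi> i \<in> borel_measurable M"
    and sq: "\<And>i. integrable M (\<lambda>w. (\<xi> i w)\<^sup>2)"
    and unc: "\<And>i k. i \<noteq> k \<Longrightarrow> expectation (\<lambda>w. \<xi> i w * \<xi> k w) = 0"
  shows "integrable M (\<lambda>w. (\<Sum>i\<in>I. c i * \<xi> i w)\<^sup>2)"
    and "expectation (\<lambda>w. (\<Sum>i\<in>I. c i * \<xi> i w)\<^sup>2) = (\<Sum>i\<in>I. (c i)\<^sup>2 * expectation (\<lambda>w. (\<xi> i w)\<^sup>2))"
proof -
  have prod_int: "integrable M (\<lambda>w. \<xi> i w * \<xi> k w)" for i k
  proof (rule Bochner_Integration.integrable_bound)
    show "integrable M (\<lambda>w. (\<xi> i w)\<^sup>2 + (\<xi> k w)\<^sup>2)" using sq by auto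
    show "(\<lambda>w. \<xi> i w * \<xi> k w) \<in> borel_measurable M" using meas by measurable
    have "\<bar>x * y\<bar> \<le> x\<^sup>2 + y\<^sup>2" for x y :: real
    proof -
      have "2 * \<bar>x\<bar> * \<bar>y\<bar> \<le> x\<^sup>2 + y\<^sup>2" using sum_squares_bound[of "\<bar>x\<bar>" "\<bar>y\<bar>"] by simp
      moreover have "0 \<le> \<bar>x\<bar> * \<bar>y\<bar>" by simp
      ultimately show ?thesis unfolding abs_mult by linarith
    qed
    then show "AE w in M. norm (\<xi> i w * \<xi> k w) \<le> norm ((\<xi> i w)\<^sup>2 + (\<xi> k w)\<^sup>2)" by simp
  qed
  have sq_sum: "(\<Sum>i\<in>I. c i * \<xi> i w)\<^sup>2 = (\<Sum>i\<in>I. \<Sum>k\<in>I. c i * c k * (\<xi> i w * \<xi> k w))" for w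
    unfolding power2_eq_square sum_product by (simp add: ac_simps)
  show "integrable M (\<lambda>w. (\<Sum>i\<in>I. c i * \<xi> i w)\<^sup>2)"
    unfolding sq_sum using prod_int by auto
  have "expectation (\<lambda>w. (\<Sum>i\<in>I. c i * \<xi> i w)\<^sup>2)
      = (\<Sum>i\<in>I. \<Sum>k\<in>I. c i * c k * expectation (\<lambda>w. \<xi> i w * \<xi> k w))"
    unfolding sq_sum using prod_int by (simp add: integral_sum)
  also have "\<dots> = (\<Sum>i\<in>I. \<Sum>k\<in>I. if k = i then (c i)\<^sup>2 * expectation (\<lambda>w. (\<xi> i w)\<^sup>2) else 0)"
    by (intro sum.cong refl) (auto simp: unc power2_eq_square)
  finally show "expectation (\<lambda>w. (\<Sum>i\<in>I. c i * \<xi> i w)\<^sup>2) = (\<Sum>i\<in>I. (c i)\<^sup>2 * expectation (\<lambda>w. (\<xi> i w)\<^sup>2))"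
    using \<open>finite I\<close> by (simp add: sum.delta)
qed

lemma weighted_sum_tail_bound:
  fixes \<xi> :: "nat \<Rightarrow> 'a \<Rightarrow> real" and c :: "nat \<Rightarrow> nat \<Rightarrow> real"
  assumes meas: "\<And>i. \<xi> i \<in> borel_measurable M"
    and sq: "\<And>i. integrable M (\<lambda>w. (\<xi> i w)\<^sup>2)"
    and unc: "\<And>i k. i \<noteq> k \<Longrightarrow> expectation (\<lambda>w. \<xi> i w * \<xi> k w) = 0"
    and var: "\<And>i. expectation (\<lambda>w. (\<xi> i w)\<^sup>2) \<le> V"
    and coef: "(\<Sum>i<n. (c n i)\<^sup>2) \<le> C * real n"
    and "0 < K" "0 < n"
  shows "prob {w \<in> space M. K\<^sup>2 * real n \<le> (\<Sum>i<n. c n i * \<xi> i w)\<^sup>2} \<le> V * C / K\<^sup>2"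
proof -
  have "0 \<le> expectation (\<lambda>w. (\<xi> 0 w)\<^sup>2)" by simp
  then have "0 \<le> V" using var[of 0] by linarith
  have "expectation (\<lambda>w. (\<Sum>i<n. c n i * \<xi> i w)\<^sup>2) = (\<Sum>i<n. (c n i)\<^sup>2 * expectation (\<lambda>w. (\<xi> i w)\<^sup>2))"
    by (rule second_moment_uncorrelated_sum(2)[OF _ meas sq unc]) simp
  also have "\<dots> \<le> (\<Sum>i<n. (c n i)\<^sup>2 * V)"
    by (intro sum_mono mult_left_mono var) auto
  also have "\<dots> = V * (\<Sum>i<n. (c n i)\<^sup>2)" by (simp add: sum_distrib_left mult.commute)
  also have "\<dots> \<le> V * (C * real n)" using coef \<open>0 \<le> V\<close> by (rule mult_left_mono)
  finally have second_moment: "expectation (\<lambda>w. (\<Sum>i<n. c n i * \<xi> i w)\<^sup>2) \<le> V * (C * real n)" .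
  have "prob {w \<in> space M. K\<^sup>2 * real n \<le> (\<Sum>i<n. c n i * \<xi> i w)\<^sup>2}
      \<le> expectation (\<lambda>w. (\<Sum>i<n. c n i * \<xi> i w)\<^sup>2) / (K\<^sup>2 * real n)"
    using second_moment_uncorrelated_sum(1)[OF _ meas sq unc] assms(6,7)
    by (intro integral_Markov_inequality_measure[where A="space M"]) auto
  also have "\<dots> \<le> V * (C * real n) / (K\<^sup>2 * real n)"
    using second_moment assms(6,7) by (intro divide_right_mono) auto
  also have "\<dots> = V * C / K\<^sup>2" using assms(7) by simp
  finally show ?thesis .
qed

lemma Op_weighted_mean_uncorrelated:
  fixes \<xi> :: "nat \<Rightarrow> 'a \<Rightarrow> real" and c :: "nat \<Rightarrow> nat \<Rightarrow> real"
  assumes meas: "\<And>i. \<xi> i \<in> borel_measurable M"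
    and sq: "\<And>i. integrable M (\<lambda>w. (\<xi> i w)\<^sup>2)"
    and unc: "\<And>i k. i \<noteq> k \<Longrightarrow> expectation (\<lambda>w. \<xi> i w * \<xi> k w) = 0"
    and var: "\<And>i. expectation (\<lambda>w. (\<xi> i w)\<^sup>2) \<le> V"
    and coef: "\<And>n. (\<Sum>i<n. (c n i)\<^sup>2) \<le> C * real n"
  shows "Op M (\<lambda>n w. \<bar>\<Sum>i<n. c n i * \<xi> i w\<bar> / real n) (\<lambda>n. 1 / sqrt (real n))"
  unfolding Op_def
proof (intro allI impI)
  fix e :: real assume e: "e > 0"
  define S where "S n w = (\<Sum>i<n. c n i * \<xi> i w)" for n w
  define K where "K = sqrt ((\<bar>V * C\<bar> + 1) / e)"
  have "K > 0" unfolding K_def using e by simp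
  have eK: "K\<^sup>2 * e = \<bar>V * C\<bar> + 1" unfolding K_def using e by simp
  have "V * C < K\<^sup>2 * e" unfolding eK using abs_ge_self[of "V * C"] by linarith
  then have "V * C / K\<^sup>2 < e" using \<open>K > 0\<close> by (simp add: divide_less_eq mult.commute)
  show "\<exists>K N. \<forall>n\<ge>N. \<exists>S\<in>sets M. {w \<in> space M. \<bar>\<Sum>i<n. c n i * \<xi> i w\<bar> / real n > K * (1 / sqrt (real n))} \<subseteq> S \<and> measure M S < e"
  proof (intro exI allI impI)
    fix n :: nat assume "n \<ge> 1"
    then have n: "real n > 0" by simp
    let ?A = "{w \<in> space M. K\<^sup>2 * real n \<le> (S n w)\<^sup>2}"
    have "S n \<in> borel_measurable M" unfolding S_def using meas by measurable
    then have "?A \<in> sets M" by measurable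
    have sub: "{w \<in> space M. \<bar>\<Sum>i<n. c n i * \<xi> i w\<bar> / real n > K * (1 / sqrt (real n))} \<subseteq> ?A"
    proof safe
      fix w assume "w \<in> space M" "\<bar>\<Sum>i<n. c n i * \<xi> i w\<bar> / real n > K * (1 / sqrt (real n))"
      from this(2) have "K * (1 / sqrt (real n)) < \<bar>S n w\<bar> / real n" unfolding S_def .
      then have "K * (1 / sqrt (real n)) * real n < \<bar>S n w\<bar>"
        using n by (simp only: less_divide_eq)
      moreover have "K * (1 / sqrt (real n)) * real n = K * sqrt (real n)"
        using n by (simp add: field_simps real_div_sqrt)
      ultimately have "K * sqrt (real n) < \<bar>S n w\<bar>" by simp
      then have "(K * sqrt (real n))\<^sup>2 < (\<bar>S n w\<bar>)\<^sup>2"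
        using \<open>K > 0\<close> by (intro power_strict_mono) auto
      then show "K\<^sup>2 * real n \<le> (S n w)\<^sup>2" by (simp add: power_mult_distrib)
    qed
    have "measure M ?A \<le> V * C / K\<^sup>2"
      unfolding S_def using n \<open>K > 0\<close> by (intro weighted_sum_tail_bound[OF meas sq unc var coef]) auto
    then show "\<exists>S\<in>sets M. {w \<in> space M. \<bar>\<Sum>i<n. c n i * \<xi> i w\<bar> / real n > K * (1 / sqrt (real n))} \<subseteq> S \<and> measure M S < e"
      using \<open>?A \<in> sets M\<close> sub \<open>V * C / K\<^sup>2 < e\<close> by (intro bexI[of _ ?A]) auto
  qed
qed

end

section \<open>Gaussian measurement noise\<close>

locale gaussian_noise = prob_space M for M :: "'w measure" +
  fixes \<sigma> :: real and eps :: "nat \<Rightarrow> nat \<Rightarrow> 'w \<Rightarrow> real"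
  assumes sigma_nonneg: "0 \<le> \<sigma>"
    and noise_rv: "\<And>i j. eps i j \<in> borel_measurable M"
    and noise_indep: "indep_vars (\<lambda>_. borel) (\<lambda>(i, j). eps i j) (UNIV \<times> {0, 1})"
    and noise_gauss: "\<sigma> > 0 \<Longrightarrow> \<forall>i j. distributed M lborel (eps i j) (normal_density 0 \<sigma>)"
    and noise_zero: "\<sigma> = 0 \<Longrightarrow> \<forall>i j. AE w in M. eps i j w = 0"
begin

lemma gaussian_noise_transform_moments:
  fixes h :: "real \<Rightarrow> real"
  assumes "\<sigma> > 0" and h_meas: "h \<in> borel_measurable borel"
    and h_sq_int: "integrable lborel (\<lambda>x. normal_density 0 \<sigma> x * (h x)\<^sup>2)"
    and h_int: "integrable lborel (\<lambda>x. normal_density 0 \<sigma> x * h x)"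
    and h_mean: "(\<integral>x. normal_density 0 \<sigma> x * h x \<partial>lborel) = 0"
    and j: "j \<in> {0, 1}"
  shows "\<And>i. integrable M (\<lambda>w. (h (eps i j w))\<^sup>2)"
    and "\<And>i k. i \<noteq> k \<Longrightarrow> expectation (\<lambda>w. h (eps i j w) * h (eps k j w)) = 0"
    and "\<And>i. expectation (\<lambda>w. (h (eps i j w))\<^sup>2) = (\<integral>x. normal_density 0 \<sigma> x * (h x)\<^sup>2 \<partial>lborel)"
proof -
  have D: "distributed M lborel (eps i j) (normal_density 0 \<sigma>)" for i
    using noise_gauss assms(1) by auto
  have nn: "0 \<le> normal_density 0 \<sigma> x" for x by (rule normal_density_nonneg)
  have int1: "integrable M (\<lambda>w. h (eps i j w))" for i
    using distributed_integrable[OF D, of h] h_int h_meas nn by auto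
  have mean: "expectation (\<lambda>w. h (eps i j w)) = 0" for i
    using distributed_integral[OF D, of h] h_mean h_meas nn by auto
  have indep: "indep_vars (\<lambda>_. borel) (\<lambda>x w. h ((\<lambda>(i, j). eps i j) x w)) {(i, j), (k, j)}" for i k
    by (rule indep_vars_subset[OF indep_vars_compose2[OF noise_indep]]) (use h_meas j in auto)
  show "integrable M (\<lambda>w. (h (eps i j w))\<^sup>2)" for i
    using distributed_integrable[OF D, of "\<lambda>x. (h x)\<^sup>2"] h_sq_int h_meas nn by auto
  show "expectation (\<lambda>w. (h (eps i j w))\<^sup>2) = (\<integral>x. normal_density 0 \<sigma> x * (h x)\<^sup>2 \<partial>lborel)" for i
    using distributed_integral[OF D, of "\<lambda>x. (h x)\<^sup>2"] h_meas nn by auto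
  show "expectation (\<lambda>w. h (eps i j w) * h (eps k j w)) = 0" if "i \<noteq> k" for i k
  proof -
    have "expectation (\<lambda>w. \<Prod>x\<in>{(i, j), (k, j)}. h ((\<lambda>(i, j). eps i j) x w))
        = (\<Prod>x\<in>{(i, j), (k, j)}. expectation (\<lambda>w. h ((\<lambda>(i, j). eps i j) x w)))"
      by (rule indep_vars_lebesgue_integral[OF _ indep]) (auto simp: int1)
    then show ?thesis using that by (simp add: mean)
  qed
qed

lemma degenerate_noise_transform_moments:
  fixes h :: "real \<Rightarrow> real"
  assumes "\<sigma> = 0" and h_meas: "h \<in> borel_measurable borel" and h_zero: "h 0 = 0"
  shows "\<And>i. integrable M (\<lambda>w. (h (eps i j w))\<^sup>2)"
    and "\<And>i k. expectation (\<lambda>w. h (eps i j w) * h (eps k j w)) = 0"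
    and "\<And>i. expectation (\<lambda>w. (h (eps i j w))\<^sup>2) = 0"
proof -
  have zero: "AE w in M. h (eps i j w) = 0" for i
  proof -
    have "AE w in M. eps i j w = 0" using noise_zero[OF assms(1)] by blast
    then show ?thesis by eventually_elim (simp add: h_zero)
  qed
  have h_rv: "(\<lambda>w. h (eps i j w)) \<in> borel_measurable M" for i
    using measurable_compose[OF noise_rv h_meas] by (simp add: comp_def)
  show "integrable M (\<lambda>w. (h (eps i j w))\<^sup>2)" for i
    by (rule integrable_cong_AE_imp[of M "\<lambda>_. 0"]) (use zero[of i] h_rv[of i] in auto)
  show "expectation (\<lambda>w. (h (eps i j w))\<^sup>2) = 0" for i
    using integral_cong_AE[of "\<lambda>w. (h (eps i j w))\<^sup>2" M "\<lambda>_. 0"] zero[of i] h_rv[of i] by auto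
  show "expectation (\<lambda>w. h (eps i j w) * h (eps k j w)) = 0" for i k
  proof -
    have "AE w in M. h (eps i j w) * h (eps k j w) = 0"
      using zero[of i] by eventually_elim simp
    then show ?thesis
      using integral_cong_AE[of "\<lambda>w. h (eps i j w) * h (eps k j w)" M "\<lambda>_. 0"] h_rv[of i] h_rv[of k]
      by simp
  qed
qed

lemma Op_centered_noise_transform_mean:
  fixes h :: "real \<Rightarrow> real"
  assumes "h \<in> borel_measurable borel"
    and "\<sigma> > 0 \<Longrightarrow> integrable lborel (\<lambda>x. normal_density 0 \<sigma> x * (h x)\<^sup>2)"
    and "\<sigma> > 0 \<Longrightarrow> integrable lborel (\<lambda>x. normal_density 0 \<sigma> x * h x)"
    and "\<sigma> > 0 \<Longrightarrow> (\<integral>x. normal_density 0 \<sigma> x * h x \<partial>lborel) = 0"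
    and "\<sigma> = 0 \<Longrightarrow> h 0 = 0"
    and "j \<in> {0, 1}"
    and coef: "\<And>n. (\<Sum>i<n. (c n i)\<^sup>2) \<le> C * real n"
  shows "Op M (\<lambda>n w. \<bar>\<Sum>i<n. c n i * h (eps i j w)\<bar> / real n) (\<lambda>n. 1 / sqrt (real n))"
proof -
  have h_rv: "(\<lambda>w. h (eps i j w)) \<in> borel_measurable M" for i
    using measurable_compose[OF noise_rv assms(1)] by (simp add: comp_def)
  show ?thesis
  proof (cases "\<sigma> > 0")
    case True
    show ?thesis
      using gaussian_noise_transform_moments[OF True assms(1) assms(2-4)[OF True] assms(6)]
      by (intro Op_weighted_mean_uncorrelated[OF h_rv _ _ _ coef]) auto
  next
    case False
    then have "\<sigma> = 0" using sigma_nonneg by simp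
    show ?thesis
      using degenerate_noise_transform_moments[OF \<open>\<sigma> = 0\<close> assms(1) assms(5)[OF \<open>\<sigma> = 0\<close>]]
      by (intro Op_weighted_mean_uncorrelated[OF h_rv _ _ _ coef]) auto
  qed
qed

lemma Op_noise_mean:
  assumes "j \<in> {0, 1}" "\<And>n. (\<Sum>i<n. (c n i)\<^sup>2) \<le> C * real n"
  shows "Op M (\<lambda>n w. \<bar>\<Sum>i<n. c n i * eps i j w\<bar> / real n) (\<lambda>n. 1 / sqrt (real n))"
  using Op_centered_noise_transform_mean[of "\<lambda>x. x", OF _ _ _ _ _ assms]
    integrable_normal_moment[of \<sigma> 0 2] integrable_normal_moment[of \<sigma> 0 1]
    integral_normal_moment_odd[of \<sigma> 0 0]
  by simp

lemma Op_noise_square_mean: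
  assumes "j \<in> {0, 1}" "\<And>n. (\<Sum>i<n. (c n i)\<^sup>2) \<le> C * real n"
  shows "Op M (\<lambda>n w. \<bar>\<Sum>i<n. c n i * ((eps i j w)\<^sup>2 - \<sigma>\<^sup>2)\<bar> / real n) (\<lambda>n. 1 / sqrt (real n))"
proof (rule Op_centered_noise_transform_mean[of "\<lambda>x. x\<^sup>2 - \<sigma>\<^sup>2", OF _ _ _ _ _ assms])
  assume s: "\<sigma> > 0"
  have i4: "integrable lborel (\<lambda>x. normal_density 0 \<sigma> x * x ^ 4)"
    and i2: "integrable lborel (\<lambda>x. normal_density 0 \<sigma> x * x\<^sup>2)"
    and i0: "integrable lborel (\<lambda>x. normal_density 0 \<sigma> x)"
    using integrable_normal_moment[OF s, of 0 4] integrable_normal_moment[OF s, of 0 2]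
      integrable_normal_moment[OF s, of 0 0] by simp_all
  have sq: "normal_density 0 \<sigma> x * (x\<^sup>2 - \<sigma>\<^sup>2)\<^sup>2
      = normal_density 0 \<sigma> x * x ^ 4 - 2 * \<sigma>\<^sup>2 * (normal_density 0 \<sigma> x * x\<^sup>2) + \<sigma> ^ 4 * normal_density 0 \<sigma> x" for x
    by (simp add: power2_eq_square algebra_simps power4_eq_xxxx)
  have lin: "normal_density 0 \<sigma> x * (x\<^sup>2 - \<sigma>\<^sup>2)
      = normal_density 0 \<sigma> x * x\<^sup>2 - \<sigma>\<^sup>2 * normal_density 0 \<sigma> x" for x
    by (simp add: algebra_simps)
  show "integrable lborel (\<lambda>x. normal_density 0 \<sigma> x * (x\<^sup>2 - \<sigma>\<^sup>2)\<^sup>2)"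
    unfolding sq using i4 i2 i0 by auto
  show "integrable lborel (\<lambda>x. normal_density 0 \<sigma> x * (x\<^sup>2 - \<sigma>\<^sup>2))"
    unfolding lin using i2 i0 by auto
  have "(\<integral>x. normal_density 0 \<sigma> x * x\<^sup>2 \<partial>lborel) = \<sigma>\<^sup>2"
    using integral_normal_moment_even[OF s, of 0 1] by (simp add: power2_eq_square)
  moreover have "(\<integral>x. normal_density 0 \<sigma> x \<partial>lborel) = 1"
    using integral_normal_moment_even[OF s, of 0 0] by simp
  ultimately show "(\<integral>x. normal_density 0 \<sigma> x * (x\<^sup>2 - \<sigma>\<^sup>2) \<partial>lborel) = 0"
    unfolding lin using i2 i0 by simp
qed auto

lemma Op_noise_expansion:
  assumes a: "\<And>n. (\<Sum>i<n. (a n i)\<^sup>2) \<le> C\<^sub>a * real n"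
    and b: "\<And>n. (\<Sum>i<n. (b n i)\<^sup>2) \<le> C\<^sub>b * real n"
    and q: "\<And>n. (\<Sum>i<n. (q n i)\<^sup>2) \<le> C\<^sub>q * real n"
  shows "Op M (\<lambda>n w. \<bar>\<Sum>i<n. a n i * eps i 0 w + b n i * eps i 1 w
                        + q n i * ((eps i 0 w)\<^sup>2 + (eps i 1 w)\<^sup>2 - 2 * \<sigma>\<^sup>2)\<bar> / real n)
          (\<lambda>n. 1 / sqrt (real n))"
proof (rule Op_mono)
  let ?A = "\<lambda>n w. \<Sum>i<n. a n i * eps i 0 w" and ?B = "\<lambda>n w. \<Sum>i<n. b n i * eps i 1 w"
  let ?Q0 = "\<lambda>n w. \<Sum>i<n. q n i * ((eps i 0 w)\<^sup>2 - \<sigma>\<^sup>2)"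
  let ?Q1 = "\<lambda>n w. \<Sum>i<n. q n i * ((eps i 1 w)\<^sup>2 - \<sigma>\<^sup>2)"
  show "Op M (\<lambda>n w. \<bar>?A n w\<bar> / real n + \<bar>?B n w\<bar> / real n + \<bar>?Q0 n w\<bar> / real n + \<bar>?Q1 n w\<bar> / real n)
      (\<lambda>n. 1 / sqrt (real n))"
    by (rule Op_add[OF Op_add[OF Op_add[OF Op_noise_mean[OF _ a] Op_noise_mean[OF _ b]]
          Op_noise_square_mean[OF _ q]] Op_noise_square_mean[OF _ q]]) simp_all
  fix n w
  have "(\<Sum>i<n. a n i * eps i 0 w + b n i * eps i 1 w + q n i * ((eps i 0 w)\<^sup>2 + (eps i 1 w)\<^sup>2 - 2 * \<sigma>\<^sup>2))
      = ?A n w + ?B n w + ?Q0 n w + ?Q1 n w"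
    by (simp add: sum.distrib[symmetric] algebra_simps)
  moreover have "\<bar>?A n w + ?B n w + ?Q0 n w + ?Q1 n w\<bar> \<le> \<bar>?A n w\<bar> + \<bar>?B n w\<bar> + \<bar>?Q0 n w\<bar> + \<bar>?Q1 n w\<bar>"
    by linarith
  ultimately show "\<bar>\<Sum>i<n. a n i * eps i 0 w + b n i * eps i 1 w
                        + q n i * ((eps i 0 w)\<^sup>2 + (eps i 1 w)\<^sup>2 - 2 * \<sigma>\<^sup>2)\<bar> / real n
      \<le> \<bar>?A n w\<bar> / real n + \<bar>?B n w\<bar> / real n + \<bar>?Q0 n w\<bar> / real n + \<bar>?Q1 n w\<bar> / real n"
    by (simp add: divide_right_mono add_divide_distrib[symmetric])
qed

end

section \<open>Linear algebra\<close>

lemma norm_matrix_vector_mult_le: "norm ((A::real^'n^'m) *v x) \<le> norm A * norm x"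
proof -
  have "(norm (A *v x))\<^sup>2 = (\<Sum>i\<in>UNIV. (A $ i \<bullet> x)\<^sup>2)"
    unfolding power2_norm_eq_inner by (simp add: inner_vec_def matrix_mult_dot power2_eq_square)
  also have "\<dots> \<le> (\<Sum>i\<in>UNIV. (norm (A $ i))\<^sup>2 * (norm x)\<^sup>2)"
    by (intro sum_mono) (metis Cauchy_Schwarz_ineq norm_mult power2_norm_eq_inner power_mult_distrib)
  also have "\<dots> = (\<Sum>i\<in>UNIV. (norm (A $ i))\<^sup>2) * (norm x)\<^sup>2"
    by (simp add: sum_distrib_right)
  also have "\<dots> = (norm A * norm x)\<^sup>2"
    unfolding power_mult_distrib norm_vec_def L2_set_def by (simp add: sum_nonneg)
  finally show ?thesis by (rule power2_le_imp_le) simp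
qed

lemma abs_matrix_nth_le_norm: "\<bar>(A::real^'n^'m) $ k $ l\<bar> \<le> norm A"
  using component_le_norm_cart[of "A $ k" l] Finite_Cartesian_Product.norm_nth_le[of A k] by linarith

lemma sum_matrix_vector_mult: "(\<Sum>i\<in>I. A i) *v x = (\<Sum>i\<in>I. A i *v x)"
  for A :: "'i \<Rightarrow> real^'n^'m"
  by (induction I rule: infinite_finite_induct) (auto simp: matrix_vector_mult_add_rdistrib)

lemma sq_add_le: "(x + y)\<^sup>2 \<le> 2 * (x\<^sup>2 + y\<^sup>2)" for x y :: real
  using sum_squares_bound[of x y] by (simp add: power2_eq_square algebra_simps)

lemma sq_nth_le_of_norm_le:
  assumes "norm (x :: real^'n) \<le> G"
  shows "(x $ k)\<^sup>2 \<le> G\<^sup>2"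
proof -
  have "\<bar>x $ k\<bar> \<le> G" using order_trans[OF component_le_norm_cart assms] .
  moreover have "0 \<le> G" using assms norm_ge_zero[of x] by linarith
  ultimately show ?thesis by (simp add: power2_le_iff_abs_le)
qed

lemma sum_sq_nth_le:
  assumes "\<And>i. norm (g i :: real^'n) \<le> G"
  shows "(\<Sum>i<n. (g i $ k)\<^sup>2) \<le> G\<^sup>2 * real n"
  using sum_mono[of "{..<n}" "\<lambda>i. (g i $ k)\<^sup>2" "\<lambda>_. G\<^sup>2"] sq_nth_le_of_norm_le[OF assms]
  by (simp add: mult.commute)

lemma sum_sq_nth_mult_nth_le:
  assumes "\<And>i. norm (g i :: real^'n) \<le> G"
  shows "(\<Sum>i<n. (g i $ k * g i $ l)\<^sup>2) \<le> G\<^sup>2 * G\<^sup>2 * real n"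
proof -
  have "(\<Sum>i<n. (g i $ k * g i $ l)\<^sup>2) \<le> (\<Sum>i<n. G\<^sup>2 * G\<^sup>2)"
    unfolding power_mult_distrib by (intro sum_mono mult_mono sq_nth_le_of_norm_le assms zero_le_power2)
  also have "\<dots> = G\<^sup>2 * G\<^sup>2 * real n" by simp
  finally show ?thesis .
qed

lemma sum_sq_symmetrized_product_le:
  assumes "\<And>i. norm (g i :: real^'n) \<le> G"
  shows "(\<Sum>i<n. (r i $ k * g i $ l + g i $ k * r i $ l)\<^sup>2)
    \<le> 2 * G\<^sup>2 * ((\<Sum>i<n. (r i $ k)\<^sup>2) + (\<Sum>i<n. (r i $ l)\<^sup>2))"
proof -
  have "(r i $ k * g i $ l + g i $ k * r i $ l)\<^sup>2 \<le> 2 * G\<^sup>2 * ((r i $ k)\<^sup>2 + (r i $ l)\<^sup>2)" for i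
  proof -
    have "(r i $ k * g i $ l)\<^sup>2 \<le> (r i $ k)\<^sup>2 * G\<^sup>2" "(g i $ k * r i $ l)\<^sup>2 \<le> G\<^sup>2 * (r i $ l)\<^sup>2"
      using sq_nth_le_of_norm_le[OF assms] by (simp_all add: power_mult_distrib mult_left_mono mult_right_mono)
    then show ?thesis
      using sq_add_le[of "r i $ k * g i $ l" "g i $ k * r i $ l"] by (simp add: algebra_simps)
  qed
  then show ?thesis
    by (simp add: sum_mono sum_distrib_left sum.distrib[symmetric])
qed

lemma invertible_matrix_inv_mult:
  fixes A :: "real^'n^'n"
  assumes "invertible A"
  shows "A ** matrix_inv A = mat 1" "matrix_inv A ** A = mat 1"
  using someI_ex[OF assms[unfolded invertible_def]] unfolding matrix_inv_def by auto

lemma lower_bounded_imp_invertible: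
  fixes A :: "real^'n^'n"
  assumes "c > 0" "\<And>x. c * norm x \<le> norm (A *v x)"
  shows "invertible A"
proof -
  have "inj ((*v) A)"
  proof (rule injI)
    fix x y assume "A *v x = A *v y"
    then have "c * norm (x - y) \<le> 0" using assms(2)[of "x - y"] by (simp add: matrix_vector_mult_diff_distrib)
    then show "x = y" using assms(1) by (simp add: mult_le_0_iff)
  qed
  then show ?thesis
    using matrix_left_invertible_injective invertible_left_inverse by blast
qed

lemma matrix_inv_scaleR_solves:
  fixes A :: "real^'n^'n"
  assumes "c > 0" "r > 0" "\<And>x. c * norm x \<le> norm (A *v x)"
  shows "A *v (matrix_inv (r *\<^sub>R A) *v y) = (1 / r) *\<^sub>R y"
proof -
  have "(r * c) * norm x \<le> norm ((r *\<^sub>R A) *v x)" for x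
  proof -
    have "(r * c) * norm x \<le> r * norm (A *v x)"
      using mult_left_mono[OF assms(3)[of x], of r] assms(2) by (simp add: mult.assoc)
    also have "\<dots> = norm ((r *\<^sub>R A) *v x)"
      using assms(2) by (simp add: scaleR_matrix_vector_assoc[symmetric])
    finally show ?thesis .
  qed
  then have "invertible (r *\<^sub>R A)"
    by (rule lower_bounded_imp_invertible[rotated]) (use assms in simp)
  then have "(r *\<^sub>R A) *v (matrix_inv (r *\<^sub>R A) *v y) = y"
    unfolding matrix_vector_mul_assoc invertible_matrix_inv_mult(1)[OF \<open>invertible (r *\<^sub>R A)\<close>] by simp
  then have "r *\<^sub>R (A *v (matrix_inv (r *\<^sub>R A) *v y)) = y"
    unfolding scaleR_matrix_vector_assoc .
  then show ?thesis using assms(2) by (simp add: eq_vector_fraction_iff)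
qed

lemma lower_bound_perturb:
  fixes A X :: "real^'n^'n"
  assumes "\<And>x. c * norm x \<le> norm (A *v x)" "norm (X - A) \<le> c / 2"
  shows "c / 2 * norm x \<le> norm (X *v x)"
proof -
  have "norm ((X - A) *v x) \<le> c / 2 * norm x"
    using norm_matrix_vector_mult_le[of "X - A" x] mult_right_mono[OF assms(2) norm_ge_zero[of x]]
    by linarith
  moreover have "norm (A *v x) \<le> norm (X *v x) + norm ((X - A) *v x)"
    using norm_triangle_ineq[of "X *v x" "(A - X) *v x"]
    by (simp add: matrix_vector_mult_diff_rdistrib norm_minus_commute)
  ultimately show ?thesis using assms(1)[of x] by linarith
qed

lemma solution_perturbation_bound:
  fixes A X :: "real^'n^'n"
  assumes c: "c > 0" and low: "\<And>x. c * norm x \<le> norm (A *v x)"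
    and sol: "A *v x0 = z" "X *v x1 = y" and close: "norm (X - A) \<le> c / 2"
  shows "norm (x1 - x0) \<le> 2 / c * (norm (y - z) + norm (X - A) * norm x0)"
proof -
  have "X *v (x1 - x0) = (y - z) - (X - A) *v x0"
    using sol by (simp add: matrix_vector_mult_diff_distrib matrix_vector_mult_diff_rdistrib)
  then have "c / 2 * norm (x1 - x0) \<le> norm ((y - z) - (X - A) *v x0)"
    using lower_bound_perturb[OF low close, of "x1 - x0"] by simp
  also have "\<dots> \<le> norm (y - z) + norm (X - A) * norm x0"
    using norm_triangle_ineq4[of "y - z" "(X - A) *v x0"] norm_matrix_vector_mult_le[of "X - A" x0]
    by linarith
  finally show ?thesis using c by (simp add: field_simps)
qed

lemma invertible_lower_bound:
  fixes L :: "real^'n^'n"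
  assumes "invertible L"
  obtains c where "c > 0" "\<And>x. c * norm x \<le> norm (L *v x)"
proof
  have pos: "0 < norm (matrix_inv L) + 1" using norm_ge_zero[of "matrix_inv L"] by linarith
  then show "1 / (norm (matrix_inv L) + 1) > 0" by simp
  fix x
  have "x = matrix_inv L *v (L *v x)"
    by (simp add: matrix_vector_mul_assoc invertible_matrix_inv_mult(2)[OF assms])
  then have "norm x \<le> norm (matrix_inv L) * norm (L *v x)"
    by (metis norm_matrix_vector_mult_le)
  also have "\<dots> \<le> (norm (matrix_inv L) + 1) * norm (L *v x)"
    by (simp add: mult_right_mono)
  finally show "1 / (norm (matrix_inv L) + 1) * norm x \<le> norm (L *v x)"
    using pos by (simp add: field_simps)
qed

lemma eventually_lower_bound_of_limit:
  fixes A :: "nat \<Rightarrow> real^'n^'n"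
  assumes "A \<longlonglongrightarrow> L" "invertible L"
  obtains c where "c > 0" "\<forall>\<^sub>F n in sequentially. \<forall>x. c * norm x \<le> norm (A n *v x)"
proof -
  obtain c where c: "c > 0" "\<And>x. c * norm x \<le> norm (L *v x)"
    using invertible_lower_bound[OF assms(2)] by blast
  have "\<forall>\<^sub>F n in sequentially. norm (A n - L) < c / 2"
    using tendsto_iff[THEN iffD1, OF assms(1), rule_format, of "c / 2"] c(1) by (simp add: dist_norm)
  then have "\<forall>\<^sub>F n in sequentially. \<forall>x. c / 2 * norm x \<le> norm (A n *v x)"
    by eventually_elim (use lower_bound_perturb[OF c(2)] in auto)
  with c(1) show thesis by (intro that[of "c / 2"]) simp_all
qed

lemma norm_add_scaleR_le:
  fixes D M :: "'a::real_normed_vector"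
  assumes "norm M \<le> B"
  shows "norm (D + a *\<^sub>R M) \<le> norm D + B * \<bar>a\<bar>"
  using norm_triangle_ineq[of D "a *\<^sub>R M"] mult_left_mono[OF assms abs_ge_zero[of a]]
  by (simp add: mult.commute)

section \<open>Rows of the data matrices\<close>

lemma idx11_less: "idx11 k < 11"
  unfolding idx11_def using Rep_bit1[of k] by (simp add: nat_less_iff)

lemma less_11_cases: "(m::nat) < 11 \<Longrightarrow> m \<in> {0, 1, 2, 3, 4, 5, 6, 7, 8, 9, 10}"
  by (simp add: eval_nat_numeral less_Suc_eq)

lemma bij_betw_idx11: "bij_betw idx11 UNIV {..<11}"
proof (rule bij_betwI')
  show "idx11 a = idx11 b \<longleftrightarrow> a = b" for a b
    unfolding idx11_def using Rep_bit1[of a] Rep_bit1[of b] Rep_bit1_inject[of a b] by auto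
  show "idx11 k \<in> {..<11}" for k using idx11_less by simp
  show "\<exists>k\<in>UNIV. m = idx11 k" if "m \<in> {..<11}" for m
  proof -
    have "int m \<in> {0..<1 + 2 * int CARD(5)}" using that by simp
    then have "m = idx11 (Abs_bit1 (int m))" unfolding idx11_def by (simp add: Abs_bit1_inverse)
    then show ?thesis by blast
  qed
qed

lemma sum_UNIV_11: "(\<Sum>k\<in>UNIV. f (idx11 k)) = (\<Sum>m<11. f m)"
  using sum.reindex_bij_betw[OF bij_betw_idx11, of f] .

lemma vec11_nth: "vec11 xs $ k = xs ! idx11 k"
  unfolding vec11_def by simp

lemma inner_vec11: "vec11 xs \<bullet> vec11 ys = (\<Sum>m<11. xs ! m * ys ! m)"
  unfolding inner_vec_def vec11_nth using sum_UNIV_11[of "\<lambda>m. xs ! m * ys ! m"] by simp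

lemma sum_lessThan_11:
  "(\<Sum>m<(11::nat). f m) = f 0 + f 1 + f 2 + f 3 + f 4 + f 5 + f 6 + f 7 + f 8 + f 9 + (f 10 :: real)"
  by (simp add: eval_nat_numeral)

lemma inner_real3: "(x::real^3) \<bullet> y = x$1 * y$1 + x$2 * y$2 + x$3 * y$3"
  unfolding inner_vec_def by (simp add: sum_3)

lemma rowU_nth: "rowU fx pb q u $ k = rowU fx pb q 0 $ k + u * rowG pb q $ k"
  unfolding rowU_def rowG_def vec11_nth using less_11_cases[OF idx11_less[of k]]
  by (auto simp: v3list_def algebra_simps)

lemma rowV_nth: "rowV fy pb q v $ k = rowV fy pb q 0 $ k + v * rowG pb q $ k"
  unfolding rowV_def rowG_def vec11_nth using less_11_cases[OF idx11_less[of k]]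
  by (auto simp: v3list_def algebra_simps)

lemma rowU_add: "rowU fx pb q (u + e) = rowU fx pb q u + e *\<^sub>R rowG pb q"
  unfolding vec_eq_iff
proof
  show "rowU fx pb q (u + e) $ k = (rowU fx pb q u + e *\<^sub>R rowG pb q) $ k" for k
    using rowU_nth[of fx pb q "u + e" k] rowU_nth[of fx pb q u k] by (simp add: algebra_simps)
qed

lemma rowV_add: "rowV fy pb q (v + e) = rowV fy pb q v + e *\<^sub>R rowG pb q"
  unfolding vec_eq_iff
proof
  show "rowV fy pb q (v + e) $ k = (rowV fy pb q v + e *\<^sub>R rowG pb q) $ k" for k
    using rowV_nth[of fy pb q "v + e" k] rowV_nth[of fy pb q v k] by (simp add: algebra_simps)
qed

lemma rowU_zero_mult_rowG: "rowU fx pb q 0 $ k * rowG pb q $ k = 0"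
  unfolding rowU_def rowG_def vec11_nth using less_11_cases[OF idx11_less[of k]]
  by (auto simp: v3list_def)

lemma rowV_zero_mult_rowG: "rowV fy pb q 0 $ k * rowG pb q $ k = 0"
  unfolding rowV_def rowG_def vec11_nth using less_11_cases[OF idx11_less[of k]]
  by (auto simp: v3list_def)

lemma disjoint_support_sq_le:
  fixes a g u :: real
  assumes "a * g = 0"
  shows "(u * g)\<^sup>2 \<le> (a + u * g)\<^sup>2"
proof -
  have "(a + u * g)\<^sup>2 = a\<^sup>2 + (u * g)\<^sup>2 + 2 * u * (a * g)"
    by (simp add: power2_eq_square algebra_simps)
  then show ?thesis using assms by simp
qed

lemma sq_rowG_le_sq_rowU: "(u * rowG pb q $ k)\<^sup>2 \<le> (rowU fx pb q u $ k)\<^sup>2"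
  unfolding rowU_nth[of _ _ _ u] by (rule disjoint_support_sq_le[OF rowU_zero_mult_rowG])

lemma sq_rowG_le_sq_rowV: "(v * rowG pb q $ k)\<^sup>2 \<le> (rowV fy pb q v $ k)\<^sup>2"
  unfolding rowV_nth[of _ _ _ v] by (rule disjoint_support_sq_le[OF rowV_zero_mult_rowG])

lemma norm_rowG: "norm (rowG pb q) = norm (q - pb)"
proof -
  have "(norm (rowG pb q))\<^sup>2 = (norm (q - pb))\<^sup>2"
    unfolding power2_norm_eq_inner rowG_def inner_vec11 sum_lessThan_11
    by (simp add: v3list_def inner_real3 algebra_simps)
  then show ?thesis by simp
qed

lemma rowU_inner_params:
  "rowU fx pb q u \<bullet> vec11 (v3list r3 @ v3list r1 @ [t1] @ v3list r2 @ [t2])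
     = fx * (q \<bullet> r1 + t1) - u * ((q - pb) \<bullet> r3)"
  unfolding rowU_def inner_vec11 sum_lessThan_11 by (simp add: v3list_def inner_real3 algebra_simps)

lemma rowV_inner_params:
  "rowV fy pb q v \<bullet> vec11 (v3list r3 @ v3list r1 @ [t1] @ v3list r2 @ [t2])
     = fy * (q \<bullet> r2 + t2) - v * ((q - pb) \<bullet> r3)"
  unfolding rowV_def inner_vec11 sum_lessThan_11 by (simp add: v3list_def inner_real3 algebra_simps)

lemma rowU_inner_depth_direction:
  "rowU fx pb q u \<bullet> vec11 ([0, 0, 0] @ v3list r @ [s] @ [0, 0, 0, 0]) = fx * (q \<bullet> r + s)"
  unfolding rowU_def inner_vec11 sum_lessThan_11 by (simp add: v3list_def inner_real3 algebra_simps)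

lemma rowV_inner_depth_direction:
  "rowV fy pb q v \<bullet> vec11 ([0, 0, 0] @ v3list r @ [s] @ [0, 0, 0, 0]) = 0"
  unfolding rowV_def inner_vec11 sum_lessThan_11 by (simp add: v3list_def)

lemma outer11_nth: "outer11 a $ k $ l = a $ k * a $ l"
  unfolding outer11_def by simp

lemma outer11_mult_vector: "outer11 a *v x = (a \<bullet> x) *\<^sub>R a"
  by (simp add: vec_eq_iff outer11_nth matrix_vector_mult_def inner_vec_def sum_distrib_left
      mult.commute mult.left_commute)

lemma norm_outer11: "norm (outer11 a) = (norm a)\<^sup>2"
proof -
  have "(norm (outer11 a))\<^sup>2 = (\<Sum>k\<in>UNIV. \<Sum>l\<in>UNIV. (a $ k)\<^sup>2 * (a $ l)\<^sup>2)"
    unfolding power2_norm_eq_inner inner_vec_def outer11_nth by (simp add: power2_eq_square ac_simps)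
  also have "\<dots> = (\<Sum>k\<in>UNIV. (a $ k)\<^sup>2) * (\<Sum>l\<in>UNIV. (a $ l)\<^sup>2)"
    unfolding sum_product ..
  also have "\<dots> = ((norm a)\<^sup>2)\<^sup>2"
    unfolding power2_norm_eq_inner inner_vec_def by (simp add: power2_eq_square)
  finally show ?thesis by (rule power2_eq_imp_eq) simp_all
qed

lemma outer11_add_scaleR_nth:
  "outer11 (r + e *\<^sub>R g) $ k $ l = outer11 r $ k $ l + e * (r $ k * g $ l + g $ k * r $ l) + e\<^sup>2 * (g $ k * g $ l)"
  by (simp add: outer11_nth power2_eq_square algebra_simps)

section \<open>The camera model\<close>

locale camera_model = gaussian_noise M \<sigma> eps
  for M :: "'w measure" and \<sigma> :: real and eps :: "nat \<Rightarrow> nat \<Rightarrow> 'w \<Rightarrow> real" +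
  fixes fx fy :: real and R :: "real^3^3" and t :: "real^3" and p :: "nat \<Rightarrow> real^3"
    and s2 :: "nat \<Rightarrow> 'w \<Rightarrow> real"
  assumes fx_pos: "fx > 0"
    and rotation: "orthogonal_matrix R"
    and in_front: "\<And>i. depth R t (p i) > 0"
    and bounded_points: "bounded (range p)"
    and BtB_limit: "\<exists>L. ((\<lambda>n. (1 / real n) *\<^sub>R BtB fx fy R t p n) \<longlonglongrightarrow> L) \<and> invertible L"
    and s2_rate: "Op M (\<lambda>n w. sqrt (real n) * \<bar>s2 n w - \<sigma>\<^sup>2\<bar>) (\<lambda>_. 1)"
begin

definition u_true :: "nat \<Rightarrow> real" where "u_true i = uo fx R t (p i)"
definition v_true :: "nat \<Rightarrow> real" where "v_true i = vo fy R t (p i)"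

definition g_row :: "nat \<Rightarrow> nat \<Rightarrow> real^11" where "g_row n i = rowG (pbar p n) (p i)"
definition u_row :: "nat \<Rightarrow> nat \<Rightarrow> real^11" where "u_row n i = rowU fx (pbar p n) (p i) (u_true i)"
definition v_row :: "nat \<Rightarrow> nat \<Rightarrow> real^11" where "v_row n i = rowV fy (pbar p n) (p i) (v_true i)"

definition BtB_mean :: "nat \<Rightarrow> real^11^11" where "BtB_mean n = (1 / real n) *\<^sub>R BtB fx fy R t p n"

definition AtA_bias :: "nat \<Rightarrow> 'w \<Rightarrow> real^11^11" where
  "AtA_bias n w = (1 / real n) *\<^sub>R AtA fx fy R t p eps n w - (1 / real n) *\<^sub>R BtB fx fy R t p n
                    - \<sigma>\<^sup>2 *\<^sub>R ((1 / real n) *\<^sub>R GtG p n)"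

definition Atb_bias :: "nat \<Rightarrow> 'w \<Rightarrow> real^11" where
  "Atb_bias n w = (1 / real n) *\<^sub>R Atb fx fy R t p eps n w - (1 / real n) *\<^sub>R Btb fx fy R t p eps n w
                    - \<sigma>\<^sup>2 *\<^sub>R ((1 / real n) *\<^sub>R Gt1 p n)"

lemma BtB_eq: "BtB fx fy R t p n = (\<Sum>i<n. outer11 (u_row n i) + outer11 (v_row n i))"
  unfolding BtB_def gram_def u_row_def v_row_def u_true_def v_true_def ..

lemma AtA_eq: "AtA fx fy R t p eps n w
    = (\<Sum>i<n. outer11 (u_row n i + eps i 0 w *\<^sub>R g_row n i) + outer11 (v_row n i + eps i 1 w *\<^sub>R g_row n i))"
  unfolding AtA_def gram_def uobs_def vobs_def rowU_add rowV_add u_row_def v_row_def g_row_def u_true_def v_true_def ..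

lemma Btb_eq: "Btb fx fy R t p eps n w = (\<Sum>i<n. (u_true i + eps i 0 w) *\<^sub>R u_row n i + (v_true i + eps i 1 w) *\<^sub>R v_row n i)"
  unfolding Btb_def cross_def u_row_def v_row_def u_true_def v_true_def uobs_def vobs_def ..

lemma Atb_eq: "Atb fx fy R t p eps n w = (\<Sum>i<n. (u_true i + eps i 0 w) *\<^sub>R (u_row n i + eps i 0 w *\<^sub>R g_row n i)
    + (v_true i + eps i 1 w) *\<^sub>R (v_row n i + eps i 1 w *\<^sub>R g_row n i))"
  unfolding Atb_def cross_def uobs_def vobs_def rowU_add rowV_add u_row_def v_row_def g_row_def u_true_def v_true_def ..

lemma GtG_eq: "GtG p n = (\<Sum>i<n. 2 *\<^sub>R outer11 (g_row n i))"
  unfolding GtG_def g_row_def ..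

lemma Gt1_eq: "Gt1 p n = (\<Sum>i<n. 2 *\<^sub>R g_row n i)"
  unfolding Gt1_def g_row_def ..

lemma g_row_bound: obtains G where "0 \<le> G" "\<And>n i. norm (g_row n i) \<le> G"
proof -
  obtain P where P: "\<And>i. norm (p i) \<le> P"
    using bounded_points unfolding bounded_iff by blast
  have "0 \<le> P" using P[of 0] norm_ge_zero[of "p 0"] by linarith
  have pbar_le: "norm (pbar p n) \<le> P" for n
  proof (cases "n = 0")
    case False
    have "norm (\<Sum>i<n. p i) \<le> real n * P"
      using norm_sum[of p "{..<n}"] sum_mono[of "{..<n}" "\<lambda>i. norm (p i)" "\<lambda>_. P"] P by simp
    then show ?thesis using False by (simp add: pbar_def divide_le_eq mult.commute)
  qed (simp add: pbar_def \<open>0 \<le> P\<close>)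
  have "norm (g_row n i) \<le> 2 * P" for n i
    unfolding g_row_def norm_rowG
    using norm_triangle_ineq4[of "p i" "pbar p n"] P[of i] pbar_le[of n] by linarith
  with \<open>0 \<le> P\<close> show thesis by (intro that[of "2 * P"]) auto
qed

lemma row_sq_sums_bound:
  obtains T where "0 \<le> T" "\<And>n k. (\<Sum>i<n. (u_row n i $ k)\<^sup>2 + (v_row n i $ k)\<^sup>2) \<le> T * real n"
proof -
  obtain L where "(\<lambda>n. (1 / real n) *\<^sub>R BtB fx fy R t p n) \<longlonglongrightarrow> L"
    using BtB_limit by blast
  then have "bounded (range (\<lambda>n. (1 / real n) *\<^sub>R BtB fx fy R t p n))"
    by (rule convergent_imp_bounded)
  then obtain T where T: "\<And>n. norm ((1 / real n) *\<^sub>R BtB fx fy R t p n) \<le> T"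
    unfolding bounded_iff by blast
  have diag: "BtB fx fy R t p n $ k $ k = (\<Sum>i<n. (u_row n i $ k)\<^sup>2 + (v_row n i $ k)\<^sup>2)" for n k
    unfolding BtB_eq by (simp add: outer11_nth power2_eq_square)
  have "BtB fx fy R t p n $ k $ k \<le> T * real n" for n k
  proof (cases "n = 0")
    case False
    have "\<bar>BtB fx fy R t p n $ k $ k\<bar> / real n \<le> T"
      using abs_matrix_nth_le_norm[of "(1 / real n) *\<^sub>R BtB fx fy R t p n" k k] T[of n] by simp
    then show ?thesis using False by (simp add: divide_le_eq)
  qed (simp add: BtB_eq)
  moreover have "0 \<le> T" using T[of 0] norm_ge_zero[of "(1 / real 0) *\<^sub>R BtB fx fy R t p 0"] by linarith
  ultimately show thesis by (intro that[of T]) (simp_all add: diag[symmetric])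
qed

lemma sum_sq_u_row_le: "(\<Sum>i<n. (u_row n i $ k)\<^sup>2) \<le> T * real n"
  if "\<And>n k. (\<Sum>i<n. (u_row n i $ k)\<^sup>2 + (v_row n i $ k)\<^sup>2) \<le> T * real n"
  using sum_mono[of "{..<n}" "\<lambda>i. (u_row n i $ k)\<^sup>2" "\<lambda>i. (u_row n i $ k)\<^sup>2 + (v_row n i $ k)\<^sup>2"]
    that[of n k] by simp

lemma sum_sq_v_row_le: "(\<Sum>i<n. (v_row n i $ k)\<^sup>2) \<le> T * real n"
  if "\<And>n k. (\<Sum>i<n. (u_row n i $ k)\<^sup>2 + (v_row n i $ k)\<^sup>2) \<le> T * real n"
  using sum_mono[of "{..<n}" "\<lambda>i. (v_row n i $ k)\<^sup>2" "\<lambda>i. (u_row n i $ k)\<^sup>2 + (v_row n i $ k)\<^sup>2"]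
    that[of n k] by simp

lemma AtA_bias_nth:
  "AtA_bias n w $ k $ l
   = (\<Sum>i<n. (u_row n i $ k * g_row n i $ l + g_row n i $ k * u_row n i $ l) * eps i 0 w
          + (v_row n i $ k * g_row n i $ l + g_row n i $ k * v_row n i $ l) * eps i 1 w
          + g_row n i $ k * g_row n i $ l * ((eps i 0 w)\<^sup>2 + (eps i 1 w)\<^sup>2 - 2 * \<sigma>\<^sup>2)) / real n"
proof -
  have "AtA fx fy R t p eps n w $ k $ l - BtB fx fy R t p n $ k $ l - \<sigma>\<^sup>2 * GtG p n $ k $ l
      = (\<Sum>i<n. outer11 (u_row n i + eps i 0 w *\<^sub>R g_row n i) $ k $ l
                + outer11 (v_row n i + eps i 1 w *\<^sub>R g_row n i) $ k $ l
                - (outer11 (u_row n i) $ k $ l + outer11 (v_row n i) $ k $ l)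
                - \<sigma>\<^sup>2 * (2 * outer11 (g_row n i) $ k $ l))"
    unfolding AtA_eq BtB_eq GtG_eq by (simp add: sum_subtractf sum_distrib_left)
  also have "\<dots> = (\<Sum>i<n. (u_row n i $ k * g_row n i $ l + g_row n i $ k * u_row n i $ l) * eps i 0 w
          + (v_row n i $ k * g_row n i $ l + g_row n i $ k * v_row n i $ l) * eps i 1 w
          + g_row n i $ k * g_row n i $ l * ((eps i 0 w)\<^sup>2 + (eps i 1 w)\<^sup>2 - 2 * \<sigma>\<^sup>2))"
    by (intro sum.cong refl) (simp add: outer11_add_scaleR_nth outer11_nth algebra_simps power2_eq_square)
  finally have "(AtA fx fy R t p eps n w $ k $ l - BtB fx fy R t p n $ k $ l - \<sigma>\<^sup>2 * GtG p n $ k $ l) / real n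
      = (\<Sum>i<n. (u_row n i $ k * g_row n i $ l + g_row n i $ k * u_row n i $ l) * eps i 0 w
          + (v_row n i $ k * g_row n i $ l + g_row n i $ k * v_row n i $ l) * eps i 1 w
          + g_row n i $ k * g_row n i $ l * ((eps i 0 w)\<^sup>2 + (eps i 1 w)\<^sup>2 - 2 * \<sigma>\<^sup>2)) / real n"
    by simp
  then show ?thesis unfolding AtA_bias_def by (simp add: diff_divide_distrib)
qed

lemma Op_AtA_bias: "Op M (\<lambda>n w. norm (AtA_bias n w)) (\<lambda>n. 1 / sqrt (real n))"
proof (intro Op_norm_vec)
  obtain G where G: "0 \<le> G" "\<And>n i. norm (g_row n i) \<le> G" using g_row_bound by blast
  obtain T where T: "0 \<le> T" "\<And>n k. (\<Sum>i<n. (u_row n i $ k)\<^sup>2 + (v_row n i $ k)\<^sup>2) \<le> T * real n"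
    using row_sq_sums_bound by blast
  have cross: "(\<Sum>i<n. (r n i $ k * g_row n i $ l + g_row n i $ k * r n i $ l)\<^sup>2) \<le> 4 * G\<^sup>2 * T * real n"
    if r: "\<And>n k. (\<Sum>i<n. (r n i $ k)\<^sup>2) \<le> T * real n" for r :: "nat \<Rightarrow> nat \<Rightarrow> real^11" and n k l
  proof -
    have "(\<Sum>i<n. (r n i $ k * g_row n i $ l + g_row n i $ k * r n i $ l)\<^sup>2)
        \<le> 2 * G\<^sup>2 * ((\<Sum>i<n. (r n i $ k)\<^sup>2) + (\<Sum>i<n. (r n i $ l)\<^sup>2))"
      by (rule sum_sq_symmetrized_product_le) (rule G(2))
    also have "\<dots> \<le> 2 * G\<^sup>2 * (T * real n + T * real n)"
      using r[of n k] r[of n l] by (intro mult_left_mono add_mono) simp_all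
    finally show ?thesis by (simp add: algebra_simps)
  qed
  fix k l
  show "Op M (\<lambda>n w. norm (AtA_bias n w $ k $ l)) (\<lambda>n. 1 / sqrt (real n))"
    unfolding AtA_bias_nth real_norm_def abs_divide abs_of_nat
    by (rule Op_noise_expansion[OF cross[OF sum_sq_u_row_le[OF T(2)]] cross[OF sum_sq_v_row_le[OF T(2)]]
        sum_sq_nth_mult_nth_le[OF G(2)]])
qed

lemma Atb_bias_nth:
  "Atb_bias n w $ k
   = (\<Sum>i<n. u_true i * g_row n i $ k * eps i 0 w + v_true i * g_row n i $ k * eps i 1 w
          + g_row n i $ k * ((eps i 0 w)\<^sup>2 + (eps i 1 w)\<^sup>2 - 2 * \<sigma>\<^sup>2)) / real n"
proof -
  have "Atb fx fy R t p eps n w $ k - Btb fx fy R t p eps n w $ k - \<sigma>\<^sup>2 * Gt1 p n $ k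
      = (\<Sum>i<n. (u_true i + eps i 0 w) * (u_row n i + eps i 0 w *\<^sub>R g_row n i) $ k
                + (v_true i + eps i 1 w) * (v_row n i + eps i 1 w *\<^sub>R g_row n i) $ k
                - ((u_true i + eps i 0 w) * u_row n i $ k + (v_true i + eps i 1 w) * v_row n i $ k)
                - \<sigma>\<^sup>2 * (2 * g_row n i $ k))"
    unfolding Atb_eq Btb_eq Gt1_eq by (simp add: sum_subtractf sum_distrib_left)
  also have "\<dots> = (\<Sum>i<n. u_true i * g_row n i $ k * eps i 0 w + v_true i * g_row n i $ k * eps i 1 w
          + g_row n i $ k * ((eps i 0 w)\<^sup>2 + (eps i 1 w)\<^sup>2 - 2 * \<sigma>\<^sup>2))"
    by (intro sum.cong refl) (simp add: algebra_simps power2_eq_square)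
  finally have "(Atb fx fy R t p eps n w $ k - Btb fx fy R t p eps n w $ k - \<sigma>\<^sup>2 * Gt1 p n $ k) / real n
      = (\<Sum>i<n. u_true i * g_row n i $ k * eps i 0 w + v_true i * g_row n i $ k * eps i 1 w
          + g_row n i $ k * ((eps i 0 w)\<^sup>2 + (eps i 1 w)\<^sup>2 - 2 * \<sigma>\<^sup>2)) / real n"
    by simp
  then show ?thesis unfolding Atb_bias_def by (simp add: diff_divide_distrib)
qed

lemma Op_Atb_bias: "Op M (\<lambda>n w. norm (Atb_bias n w)) (\<lambda>n. 1 / sqrt (real n))"
proof (intro Op_norm_vec)
  obtain G where G: "0 \<le> G" "\<And>n i. norm (g_row n i) \<le> G" using g_row_bound by blast
  obtain T where T: "0 \<le> T" "\<And>n k. (\<Sum>i<n. (u_row n i $ k)\<^sup>2 + (v_row n i $ k)\<^sup>2) \<le> T * real n"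
    using row_sq_sums_bound by blast
  have u_coef: "(\<Sum>i<n. (u_true i * g_row n i $ k)\<^sup>2) \<le> T * real n" for n k
    using sum_mono[OF sq_rowG_le_sq_rowU] sum_sq_u_row_le[OF T(2), of n k]
    unfolding u_row_def g_row_def by (rule order_trans)
  have v_coef: "(\<Sum>i<n. (v_true i * g_row n i $ k)\<^sup>2) \<le> T * real n" for n k
    using sum_mono[OF sq_rowG_le_sq_rowV] sum_sq_v_row_le[OF T(2), of n k]
    unfolding v_row_def g_row_def by (rule order_trans)
  fix k
  show "Op M (\<lambda>n w. norm (Atb_bias n w $ k)) (\<lambda>n. 1 / sqrt (real n))"
    unfolding Atb_bias_nth real_norm_def abs_divide abs_of_nat
    by (rule Op_noise_expansion[OF u_coef v_coef sum_sq_nth_le[OF G(2)]])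
qed

definition noise_term :: "nat \<Rightarrow> 'w \<Rightarrow> real^11" where
  "noise_term n w = (1 / real n) *\<^sub>R (\<Sum>i<n. eps i 0 w *\<^sub>R u_row n i + eps i 1 w *\<^sub>R v_row n i)"

lemma Op_noise_term: "Op M (\<lambda>n w. norm (noise_term n w)) (\<lambda>n. 1 / sqrt (real n))"
proof (intro Op_norm_vec)
  obtain T where T: "0 \<le> T" "\<And>n k. (\<Sum>i<n. (u_row n i $ k)\<^sup>2 + (v_row n i $ k)\<^sup>2) \<le> T * real n"
    using row_sq_sums_bound by blast
  have zero_coef: "(\<Sum>i<n. (0::real)\<^sup>2) \<le> 0 * real n" for n
    by simp
  fix k
  have nth_eq: "noise_term n w $ k = (\<Sum>i<n. u_row n i $ k * eps i 0 w + v_row n i $ k * eps i 1 w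
          + 0 * ((eps i 0 w)\<^sup>2 + (eps i 1 w)\<^sup>2 - 2 * \<sigma>\<^sup>2)) / real n" for n w
    unfolding noise_term_def by (simp add: mult.commute)
  show "Op M (\<lambda>n w. norm (noise_term n w $ k)) (\<lambda>n. 1 / sqrt (real n))"
    unfolding nth_eq real_norm_def abs_divide abs_of_nat
    by (rule Op_noise_expansion[OF sum_sq_u_row_le[OF T(2)] sum_sq_v_row_le[OF T(2)] zero_coef])
qed

lemma depth_eq: "depth R t q = q \<bullet> R $ 3 + t $ 3"
  unfolding depth_def by (simp add: matrix_vector_mul_component inner_commute)

lemma u_true_mul_depth: "u_true i * depth R t (p i) = fx * (p i \<bullet> R $ 1 + t $ 1)"
  using in_front[of i] unfolding u_true_def uo_def
  by (simp add: matrix_vector_mul_component inner_commute)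

lemma v_true_mul_depth: "v_true i * depth R t (p i) = fy * (p i \<bullet> R $ 2 + t $ 2)"
  using in_front[of i] unfolding v_true_def vo_def
  by (simp add: matrix_vector_mul_component inner_commute)

lemma alpha_mul_depth_pbar:
  assumes "n > 0"
  shows "alpha R t p n * (pbar p n \<bullet> R $ 3 + t $ 3) = 1"
proof -
  have pos: "(\<Sum>i<n. depth R t (p i)) > 0" using assms in_front by (intro sum_pos) auto
  have "pbar p n \<bullet> R $ 3 + t $ 3 = (\<Sum>i<n. depth R t (p i)) / real n"
    unfolding pbar_def depth_eq using assms by (simp add: inner_sum_left sum.distrib field_simps)
  then show ?thesis unfolding alpha_def using pos assms by simp
qed

text \<open>Noise-free observations satisfy the linear model exactly, because \<open>theta_o\<close> is normalised
  by the mean depth, which is the depth of \<open>pbar\<close>.\<close>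
lemma u_row_inner_theta_o:
  assumes "n > 0"
  shows "u_row n i \<bullet> theta_o R t p n = u_true i"
proof -
  have "u_row n i \<bullet> vec11 (v3list (R$3) @ v3list (R$1) @ [t$1] @ v3list (R$2) @ [t$2])
      = u_true i * (pbar p n \<bullet> R $ 3 + t $ 3)"
    unfolding u_row_def rowU_inner_params u_true_mul_depth[symmetric] depth_eq
    by (simp add: inner_diff_left algebra_simps)
  then show ?thesis
    unfolding theta_o_def inner_scaleR_right using alpha_mul_depth_pbar[OF assms] by (simp add: ac_simps)
qed

lemma v_row_inner_theta_o:
  assumes "n > 0"
  shows "v_row n i \<bullet> theta_o R t p n = v_true i"
proof -
  have "v_row n i \<bullet> vec11 (v3list (R$3) @ v3list (R$1) @ [t$1] @ v3list (R$2) @ [t$2])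
      = v_true i * (pbar p n \<bullet> R $ 3 + t $ 3)"
    unfolding v_row_def rowV_inner_params v_true_mul_depth[symmetric] depth_eq
    by (simp add: inner_diff_left algebra_simps)
  then show ?thesis
    unfolding theta_o_def inner_scaleR_right using alpha_mul_depth_pbar[OF assms] by (simp add: ac_simps)
qed

lemma Btb_residual_eq_noise_term:
  assumes "n > 0"
  shows "(1 / real n) *\<^sub>R Btb fx fy R t p eps n w - BtB_mean n *v theta_o R t p n
    = noise_term n w"
proof -
  have "BtB fx fy R t p n *v theta_o R t p n = (\<Sum>i<n. u_true i *\<^sub>R u_row n i + v_true i *\<^sub>R v_row n i)"
    unfolding BtB_eq sum_matrix_vector_mult matrix_vector_mult_add_rdistrib outer11_mult_vector
      u_row_inner_theta_o[OF assms] v_row_inner_theta_o[OF assms] ..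
  then show ?thesis
    unfolding noise_term_def Btb_eq BtB_mean_def scaleR_matrix_vector_assoc[symmetric]
    by (simp add: scaleR_diff_right[symmetric] sum_subtractf[symmetric] algebra_simps)
qed

lemma normalized_BtB_lower_bound:
  obtains c where "c > 0"
    "\<forall>\<^sub>F n in sequentially. \<forall>x. c * norm x \<le> norm (BtB_mean n *v x)"
  using BtB_limit eventually_lower_bound_of_limit unfolding BtB_mean_def by blast

lemma normalized_G_bounds:
  obtains B where "\<And>n. norm ((1 / real n) *\<^sub>R GtG p n) \<le> B" "\<And>n. norm ((1 / real n) *\<^sub>R Gt1 p n) \<le> B"
proof -
  obtain G where G: "0 \<le> G" "\<And>n i. norm (g_row n i) \<le> G" using g_row_bound by blast
  have "norm ((1 / real n) *\<^sub>R GtG p n) \<le> 2 * G\<^sup>2" for n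
  proof (cases "n = 0")
    case False
    have "norm (GtG p n) \<le> (\<Sum>i<n. 2 * (norm (g_row n i))\<^sup>2)"
      unfolding GtG_eq using norm_sum[of "\<lambda>i. 2 *\<^sub>R outer11 (g_row n i)" "{..<n}"]
      by (simp add: norm_outer11)
    also have "\<dots> \<le> real n * (2 * G\<^sup>2)"
      using sum_mono[of "{..<n}" "\<lambda>i. 2 * (norm (g_row n i))\<^sup>2" "\<lambda>_. 2 * G\<^sup>2"] G
      by (simp add: power_mono)
    finally show ?thesis using False by (simp add: divide_le_eq mult.commute)
  qed (simp add: GtG_eq)
  moreover have "norm ((1 / real n) *\<^sub>R Gt1 p n) \<le> 2 * G" for n
  proof (cases "n = 0")
    case False
    have "norm (Gt1 p n) \<le> (\<Sum>i<n. 2 * norm (g_row n i))"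
      unfolding Gt1_eq using norm_sum[of "\<lambda>i. 2 *\<^sub>R g_row n i" "{..<n}"] by simp
    also have "\<dots> \<le> real n * (2 * G)"
      using sum_mono[of "{..<n}" "\<lambda>i. 2 * norm (g_row n i)" "\<lambda>_. 2 * G"] G by simp
    finally show ?thesis using False by (simp add: divide_le_eq mult.commute)
  qed (simp add: Gt1_eq G(1))
  moreover have "0 \<le> 2 * G\<^sup>2" "0 \<le> 2 * G" using G(1) by simp_all
  ultimately show thesis
    by (intro that[of "2 * G\<^sup>2 + 2 * G"]) (meson add_increasing add_increasing2)+
qed

lemma norm_R3: "norm (R $ 3) = 1"
proof -
  have "norm (row 3 R) = 1" using rotation unfolding orthogonal_matrix_orthonormal_rows by blast
  moreover have "row 3 R = R $ 3" by (simp add: row_def vec_eq_iff)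
  ultimately show ?thesis by simp
qed

lemma depth_bound: obtains D where "0 < D" "\<And>i. depth R t (p i) \<le> D"
proof -
  obtain P where P: "\<And>i. norm (p i) \<le> P"
    using bounded_points unfolding bounded_iff by blast
  have "depth R t (p i) \<le> P + \<bar>t $ 3\<bar>" for i
    using norm_cauchy_schwarz[of "p i" "R $ 3"] P[of i] unfolding depth_eq norm_R3 by linarith
  moreover have "0 < P + \<bar>t $ 3\<bar>" using calculation[of 0] in_front[of 0] by linarith
  ultimately show thesis using that by blast
qed

definition depth_direction :: "real^11" where "depth_direction = vec11 ([0, 0, 0] @ v3list (R $ 3) @ [t $ 3] @ [0, 0, 0, 0])"

lemma norm_depth_direction_pos: "0 < norm depth_direction"
proof -
  have "(norm depth_direction)\<^sup>2 = (norm (R $ 3))\<^sup>2 + (t $ 3)\<^sup>2"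
    unfolding depth_direction_def power2_norm_eq_inner inner_vec11 sum_lessThan_11
    by (simp add: v3list_def inner_real3 power2_eq_square)
  then have "0 < (norm depth_direction)\<^sup>2" unfolding norm_R3 by (simp add: add_pos_nonneg)
  then show ?thesis by simp
qed

lemma BtB_mult_depth_direction:
  "BtB fx fy R t p n *v depth_direction = (\<Sum>i<n. (fx * depth R t (p i)) *\<^sub>R u_row n i)"
proof -
  have "u_row n i \<bullet> depth_direction = fx * depth R t (p i)"
    "v_row n i \<bullet> depth_direction = 0" for i
    unfolding u_row_def v_row_def depth_direction_def rowU_inner_depth_direction
      rowV_inner_depth_direction depth_eq by simp_all
  then show ?thesis
    unfolding BtB_eq sum_matrix_vector_mult matrix_vector_mult_add_rdistrib outer11_mult_vector by simp
qed

lemma BtB_mean_depth_direction_nth_sq_le: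
  assumes n: "0 < n" and T: "\<And>k. (\<Sum>i<n. (u_row n i $ k)\<^sup>2) \<le> T * real n"
    and D: "0 < D" "\<And>i. depth R t (p i) \<le> D"
  shows "((BtB_mean n *v depth_direction) $ k)\<^sup>2 \<le> fx\<^sup>2 * D * T * (\<Sum>i<n. depth R t (p i)) / real n"
proof -
  let ?S = "\<Sum>i<n. depth R t (p i)"
  have "((BtB_mean n *v depth_direction) $ k)\<^sup>2 = (\<Sum>i<n. (fx * depth R t (p i)) * u_row n i $ k)\<^sup>2 / (real n)\<^sup>2"
    unfolding BtB_mean_def scaleR_matrix_vector_assoc[symmetric] BtB_mult_depth_direction
    by (simp add: power_divide)
  also have "\<dots> \<le> (\<Sum>i<n. (fx * depth R t (p i))\<^sup>2) * (\<Sum>i<n. (u_row n i $ k)\<^sup>2) / (real n)\<^sup>2"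
    by (intro divide_right_mono Cauchy_Schwarz_ineq_sum) simp
  also have "\<dots> \<le> (fx\<^sup>2 * (D * ?S)) * (T * real n) / (real n)\<^sup>2"
  proof (intro divide_right_mono mult_mono)
    have "(\<Sum>i<n. (depth R t (p i))\<^sup>2) \<le> (\<Sum>i<n. D * depth R t (p i))"
      using D(2) in_front by (intro sum_mono) (simp add: power2_eq_square mult_right_mono less_imp_le)
    then show "(\<Sum>i<n. (fx * depth R t (p i))\<^sup>2) \<le> fx\<^sup>2 * (D * ?S)"
      using mult_left_mono[of _ _ "fx\<^sup>2"] by (simp add: power_mult_distrib sum_distrib_left[symmetric])
    show "0 \<le> fx\<^sup>2 * (D * ?S)"
      using D(1) in_front by (simp add: sum_nonneg less_imp_le)
  qed (simp_all add: T sum_nonneg)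
  also have "\<dots> = fx\<^sup>2 * D * T * ?S / real n"
    using n by (simp add: power2_eq_square field_simps)
  finally show ?thesis .
qed

text \<open>The invertible limit of \<open>B\<^sup>T B / n\<close> cannot annihilate the depth direction, so the depths
  cannot be small on average; this keeps the normalisation \<open>alpha\<close> bounded.\<close>
lemma mean_depth_lower_bound:
  obtains \<kappa> where "\<kappa> > 0" "\<forall>\<^sub>F n in sequentially. \<kappa> \<le> (\<Sum>i<n. depth R t (p i)) / real n"
proof -
  obtain c where c: "c > 0"
    and low: "\<forall>\<^sub>F n in sequentially. \<forall>x. c * norm x \<le> norm (BtB_mean n *v x)"
    using normalized_BtB_lower_bound by blast
  obtain T where T: "0 \<le> T" "\<And>n k. (\<Sum>i<n. (u_row n i $ k)\<^sup>2 + (v_row n i $ k)\<^sup>2) \<le> T * real n"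
    using row_sq_sums_bound by blast
  have T1: "(\<Sum>i<n. (u_row n i $ k)\<^sup>2) \<le> (T + 1) * real n" for n k
    using sum_sq_u_row_le[OF T(2), of n k] by (simp add: algebra_simps)
  obtain D where D: "0 < D" "\<And>i. depth R t (p i) \<le> D" using depth_bound by blast
  define \<kappa> where "\<kappa> = (c * norm depth_direction)\<^sup>2 / (11 * fx\<^sup>2 * D * (T + 1))"
  have "\<kappa> > 0" unfolding \<kappa>_def using c norm_depth_direction_pos fx_pos D(1) T(1) by simp
  moreover have "\<forall>\<^sub>F n in sequentially. \<kappa> \<le> (\<Sum>i<n. depth R t (p i)) / real n"
    using low eventually_ge_at_top[of 1]
  proof eventually_elim
    case (elim n)
    let ?S = "\<Sum>i<n. depth R t (p i)"
    let ?w = "BtB_mean n *v depth_direction"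
    have "(c * norm depth_direction)\<^sup>2 \<le> (norm ?w)\<^sup>2"
      using elim(1) c norm_depth_direction_pos by (intro power_mono) auto
    also have "\<dots> = (\<Sum>k\<in>UNIV. (?w $ k)\<^sup>2)"
      unfolding power2_norm_eq_inner inner_vec_def by (simp add: power2_eq_square)
    also have "\<dots> \<le> (\<Sum>k\<in>(UNIV :: 11 set). fx\<^sup>2 * D * (T + 1) * ?S / real n)"
      using elim(2) by (intro sum_mono BtB_mean_depth_direction_nth_sq_le T1 D) simp
    also have "\<dots> = 11 * fx\<^sup>2 * D * (T + 1) * (?S / real n)" by simp
    finally show "\<kappa> \<le> ?S / real n"
      unfolding \<kappa>_def using fx_pos D(1) T(1) by (simp add: divide_le_eq ac_simps)
  qed
  ultimately show thesis using that by blast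
qed

lemma theta_o_bounded:
  obtains \<Theta> where "\<forall>\<^sub>F n in sequentially. norm (theta_o R t p n) \<le> \<Theta>"
proof -
  obtain \<kappa> where \<kappa>: "\<kappa> > 0" "\<forall>\<^sub>F n in sequentially. \<kappa> \<le> (\<Sum>i<n. depth R t (p i)) / real n"
    using mean_depth_lower_bound by blast
  let ?v = "vec11 (v3list (R$3) @ v3list (R$1) @ [t$1] @ v3list (R$2) @ [t$2])"
  have "\<forall>\<^sub>F n in sequentially. norm (theta_o R t p n) \<le> norm ?v / \<kappa>"
    using \<kappa>(2)
  proof eventually_elim
    case (elim n)
    define q where "q = (\<Sum>i<n. depth R t (p i)) / real n"
    have "\<kappa> \<le> q" "0 < q" using elim \<kappa>(1) unfolding q_def by linarith+
    then have "0 \<le> 1 / q" "1 / q \<le> 1 / \<kappa>"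
      using \<kappa>(1) by (simp_all add: divide_left_mono)
    moreover have "alpha R t p n = 1 / q" unfolding alpha_def q_def by simp
    ultimately show ?case
      unfolding theta_o_def using mult_right_mono[of "1 / q" "1 / \<kappa>" "norm ?v"] by simp
  qed
  then show thesis by (rule that)
qed

lemma thetaUB_error:
  assumes "n > 0" "c > 0" "\<forall>x. c * norm x \<le> norm (BtB_mean n *v x)"
  shows "norm (thetaUB fx fy R t p eps n w - theta_o R t p n) \<le> norm (noise_term n w) / c"
proof -
  have "BtB fx fy R t p n = real n *\<^sub>R BtB_mean n" unfolding BtB_mean_def using assms(1) by simp
  then have "BtB_mean n *v thetaUB fx fy R t p eps n w = (1 / real n) *\<^sub>R Btb fx fy R t p eps n w"
    unfolding thetaUB_def using assms by (simp add: matrix_inv_scaleR_solves)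
  then have "BtB_mean n *v (thetaUB fx fy R t p eps n w - theta_o R t p n) = noise_term n w"
    using Btb_residual_eq_noise_term[OF assms(1), of w] by (simp add: matrix_vector_mult_diff_distrib)
  moreover have "c * norm (thetaUB fx fy R t p eps n w - theta_o R t p n)
      \<le> norm (BtB_mean n *v (thetaUB fx fy R t p eps n w - theta_o R t p n))"
    using assms(3) by blast
  ultimately have "c * norm (thetaUB fx fy R t p eps n w - theta_o R t p n) \<le> norm (noise_term n w)"
    by simp
  then show ?thesis using assms(2) by (simp add: le_divide_eq mult.commute)
qed

lemma norm_thetaUB_le:
  assumes "n > 0" "c > 0" "\<forall>x. c * norm x \<le> norm (BtB_mean n *v x)" "norm (theta_o R t p n) \<le> \<Theta>"
  shows "norm (thetaUB fx fy R t p eps n w) \<le> \<Theta> + 1 / c * norm (noise_term n w)"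
  using norm_triangle_sub[of "thetaUB fx fy R t p eps n w" "theta_o R t p n"]
    thetaUB_error[OF assms(1-3), of w] assms(4)
  by (simp add: divide_inverse mult.commute)

lemma thetaBE_thetaUB_bound:
  assumes n: "n > 0" and c: "c > 0" and low: "\<forall>x. c * norm x \<le> norm (BtB_mean n *v x)"
    and B: "norm ((1 / real n) *\<^sub>R GtG p n) \<le> B" "norm ((1 / real n) *\<^sub>R Gt1 p n) \<le> B"
    and small: "norm (AtA_bias n w) + B * \<bar>s2 n w - \<sigma>\<^sup>2\<bar> \<le> c / 2"
  shows "norm (thetaBE fx fy R t p eps s2 n w - thetaUB fx fy R t p eps n w)
    \<le> 2 / c * ((norm (Atb_bias n w) + B * \<bar>s2 n w - \<sigma>\<^sup>2\<bar>)
       + (norm (AtA_bias n w) + B * \<bar>s2 n w - \<sigma>\<^sup>2\<bar>) * norm (thetaUB fx fy R t p eps n w))"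
proof -
  define X where "X = (1 / real n) *\<^sub>R (AtA fx fy R t p eps n w - s2 n w *\<^sub>R GtG p n)"
  define Y where "Y = (1 / real n) *\<^sub>R (Atb fx fy R t p eps n w - s2 n w *\<^sub>R Gt1 p n)"
  define Z where "Z = (1 / real n) *\<^sub>R Btb fx fy R t p eps n w"
  have "X - BtB_mean n = AtA_bias n w + (\<sigma>\<^sup>2 - s2 n w) *\<^sub>R ((1 / real n) *\<^sub>R GtG p n)"
    unfolding X_def BtB_mean_def AtA_bias_def by (simp add: algebra_simps)
  then have X_close: "norm (X - BtB_mean n) \<le> norm (AtA_bias n w) + B * \<bar>s2 n w - \<sigma>\<^sup>2\<bar>"
    using norm_add_scaleR_le[OF B(1), of "AtA_bias n w" "\<sigma>\<^sup>2 - s2 n w"] by (simp add: abs_minus_commute)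
  have "Y - Z = Atb_bias n w + (\<sigma>\<^sup>2 - s2 n w) *\<^sub>R ((1 / real n) *\<^sub>R Gt1 p n)"
    unfolding Y_def Z_def Atb_bias_def by (simp add: algebra_simps)
  then have YZ: "norm (Y - Z) \<le> norm (Atb_bias n w) + B * \<bar>s2 n w - \<sigma>\<^sup>2\<bar>"
    using norm_add_scaleR_le[OF B(2), of "Atb_bias n w" "\<sigma>\<^sup>2 - s2 n w"] by (simp add: abs_minus_commute)
  have low': "\<And>x. c * norm x \<le> norm (BtB_mean n *v x)" using low by blast
  have "BtB_mean n *v thetaUB fx fy R t p eps n w = Z"
    unfolding thetaUB_def Z_def using matrix_inv_scaleR_solves[OF c _ low', of "real n"] n
    by (simp add: BtB_mean_def)
  moreover have "X *v thetaBE fx fy R t p eps s2 n w = Y"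
  proof -
    have "c / 2 * norm x \<le> norm (X *v x)" for x
      using lower_bound_perturb[OF low'] X_close small by simp
    then show ?thesis
      unfolding thetaBE_def X_def Y_def using matrix_inv_scaleR_solves[of "c / 2" "real n" X] n c
      by (simp add: X_def)
  qed
  ultimately have "norm (thetaBE fx fy R t p eps s2 n w - thetaUB fx fy R t p eps n w)
      \<le> 2 / c * (norm (Y - Z) + norm (X - BtB_mean n) * norm (thetaUB fx fy R t p eps n w))"
    using X_close small by (intro solution_perturbation_bound[OF c low']) simp_all
  also have "\<dots> \<le> 2 / c * ((norm (Atb_bias n w) + B * \<bar>s2 n w - \<sigma>\<^sup>2\<bar>)
       + (norm (AtA_bias n w) + B * \<bar>s2 n w - \<sigma>\<^sup>2\<bar>) * norm (thetaUB fx fy R t p eps n w))"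
    using c YZ X_close by (intro mult_left_mono add_mono mult_right_mono) simp_all
  finally show ?thesis .
qed

lemma Op_thetaUB_theta_o:
  "Op M (\<lambda>n w. norm (thetaUB fx fy R t p eps n w - theta_o R t p n)) (\<lambda>n. 1 / sqrt (real n))"
proof -
  obtain c where c: "c > 0" and low: "\<forall>\<^sub>F n in sequentially. \<forall>x. c * norm x \<le> norm (BtB_mean n *v x)"
    using normalized_BtB_lower_bound by blast
  have "Op M (\<lambda>n w. 1 / c * norm (noise_term n w)) (\<lambda>n. 1 / sqrt (real n))"
    by (rule Op_cmult[OF Op_noise_term]) (use c in simp)
  moreover have "\<forall>\<^sub>F n in sequentially. \<forall>w\<in>space M.
      norm (thetaUB fx fy R t p eps n w - theta_o R t p n) \<le> 1 / c * norm (noise_term n w)"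
    using low eventually_ge_at_top[of 1]
    by eventually_elim (use thetaUB_error c in auto)
  ultimately show ?thesis by (rule Op_eventually_mono)
qed

lemma Op_s2_error: "Op M (\<lambda>n w. \<bar>s2 n w - \<sigma>\<^sup>2\<bar>) (\<lambda>n. 1 / sqrt (real n))"
  using Op_divide_rate[OF s2_rate] eventually_ge_at_top[of 1]
  by (simp add: eventually_mono)

lemma Op_thetaBE_thetaUB:
  "Op M (\<lambda>n w. norm (thetaBE fx fy R t p eps s2 n w - thetaUB fx fy R t p eps n w)) (\<lambda>n. 1 / sqrt (real n))"
proof -
  let ?r = "\<lambda>n. 1 / sqrt (real n)"
  obtain c where c: "c > 0" and low: "\<forall>\<^sub>F n in sequentially. \<forall>x. c * norm x \<le> norm (BtB_mean n *v x)"
    using normalized_BtB_lower_bound by blast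
  obtain \<Theta> where \<Theta>: "\<forall>\<^sub>F n in sequentially. norm (theta_o R t p n) \<le> \<Theta>"
    using theta_o_bounded by blast
  obtain B where B: "\<And>n. norm ((1 / real n) *\<^sub>R GtG p n) \<le> B" "\<And>n. norm ((1 / real n) *\<^sub>R Gt1 p n) \<le> B"
    using normalized_G_bounds by blast
  have "0 \<le> B" using B(1)[of 0] norm_ge_zero[of "(1 / real 0) *\<^sub>R GtG p 0"] by linarith
  define \<Delta> where "\<Delta> n w = norm (AtA_bias n w) + B * \<bar>s2 n w - \<sigma>\<^sup>2\<bar>" for n w
  define E where "E n w = norm (Atb_bias n w) + B * \<bar>s2 n w - \<sigma>\<^sup>2\<bar>" for n w
  define U where "U n w = max \<Theta> 0 + 1 / c * norm (noise_term n w)" for n w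
  have B_s2: "Op M (\<lambda>n w. B * \<bar>s2 n w - \<sigma>\<^sup>2\<bar>) ?r"
    by (rule Op_cmult[OF Op_s2_error \<open>0 \<le> B\<close>])
  have \<Delta>_Op: "Op M \<Delta> ?r"
    unfolding \<Delta>_def by (rule Op_add[OF Op_AtA_bias B_s2])
  have E_Op: "Op M E ?r"
    unfolding E_def by (rule Op_add[OF Op_Atb_bias B_s2])
  have noise_Op: "Op M (\<lambda>n w. 1 / c * norm (noise_term n w)) ?r"
    by (rule Op_cmult[OF Op_noise_term]) (use c in simp)
  have U_Op: "Op M U (\<lambda>_. 1)"
    unfolding U_def
  proof (rule Op_add)
    show "Op M (\<lambda>n w. max \<Theta> 0) (\<lambda>_. 1)" by (rule Op_bounded[of _ _ "max \<Theta> 0"]) simp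
    show "Op M (\<lambda>n w. 1 / c * norm (noise_term n w)) (\<lambda>_. 1)"
    proof (rule Op_rate_mono[OF noise_Op])
      show "\<forall>\<^sub>F n in sequentially. 1 / sqrt (real n) \<le> 1"
        using eventually_ge_at_top[of "1::nat"] by eventually_elim simp
    qed simp
  qed
  have \<Delta>_nonneg: "0 \<le> \<Delta> n w" and U_nonneg: "0 \<le> U n w" for n w
    unfolding \<Delta>_def U_def using \<open>0 \<le> B\<close> c by simp_all
  have bound_Op: "Op M (\<lambda>n w. 2 / c * (E n w + U n w * \<Delta> n w)) ?r"
    using c by (intro Op_cmult Op_add[OF E_Op] Op_mult[OF U_Op \<Delta>_Op]) (simp_all add: U_nonneg \<Delta>_nonneg)
  show ?thesis
  proof (rule Op_le_on_small_event[OF bound_Op \<Delta>_Op inverse_sqrt_tendsto_zero])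
    show "0 < c / 2" using c by simp
    show "\<forall>\<^sub>F n in sequentially. \<forall>w\<in>space M. \<Delta> n w \<le> c / 2 \<longrightarrow>
        norm (thetaBE fx fy R t p eps s2 n w - thetaUB fx fy R t p eps n w) \<le> 2 / c * (E n w + U n w * \<Delta> n w)"
      using low \<Theta> eventually_ge_at_top[of 1]
    proof eventually_elim
      case (elim n)
      then have n: "n > 0" by simp
      show ?case
      proof (intro ballI impI)
        fix w assume small: "\<Delta> n w \<le> c / 2"
        have "norm (thetaUB fx fy R t p eps n w) \<le> U n w"
          using norm_thetaUB_le[OF n c elim(1) elim(2), of w] max.cobounded1[of \<Theta> 0]
          unfolding U_def by linarith
        from mult_right_mono[OF this \<Delta>_nonneg[of n w]]
        have UB_le: "E n w + \<Delta> n w * norm (thetaUB fx fy R t p eps n w) \<le> E n w + U n w * \<Delta> n w"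
          by (simp add: mult.commute)
        have "norm (thetaBE fx fy R t p eps s2 n w - thetaUB fx fy R t p eps n w)
            \<le> 2 / c * (E n w + \<Delta> n w * norm (thetaUB fx fy R t p eps n w))"
          using thetaBE_thetaUB_bound[OF n c elim(1) B, of w] small unfolding \<Delta>_def E_def by blast
        also have "\<dots> \<le> 2 / c * (E n w + U n w * \<Delta> n w)"
          using UB_le c by (intro mult_left_mono) simp_all
        finally show "norm (thetaBE fx fy R t p eps s2 n w - thetaUB fx fy R t p eps n w)
            \<le> 2 / c * (E n w + U n w * \<Delta> n w)" .
      qed
    qed
  qed
qed

lemma Op_thetaBE_theta_o:
  "Op M (\<lambda>n w. norm (thetaBE fx fy R t p eps s2 n w - theta_o R t p n)) (\<lambda>n. 1 / sqrt (real n))"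
proof (rule Op_mono)
  show "Op M (\<lambda>n w. norm (thetaBE fx fy R t p eps s2 n w - thetaUB fx fy R t p eps n w)
      + norm (thetaUB fx fy R t p eps n w - theta_o R t p n)) (\<lambda>n. 1 / sqrt (real n))"
    by (rule Op_add[OF Op_thetaBE_thetaUB Op_thetaUB_theta_o])
  show "norm (thetaBE fx fy R t p eps s2 n w - theta_o R t p n)
      \<le> norm (thetaBE fx fy R t p eps s2 n w - thetaUB fx fy R t p eps n w)
        + norm (thetaUB fx fy R t p eps n w - theta_o R t p n)" for n w
    using norm_triangle_ineq[of "thetaBE fx fy R t p eps s2 n w - thetaUB fx fy R t p eps n w"
        "thetaUB fx fy R t p eps n w - theta_o R t p n"] by simp
qed

end

theorem mainTheorem3:
  fixes M :: "'w measure"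
    and fx fy :: real and R :: "real^3^3" and t :: "real^3"
    and p :: "nat \<Rightarrow> real^3"
    and \<sigma> :: real
    and eps :: "nat \<Rightarrow> nat \<Rightarrow> 'w \<Rightarrow> real"
    and s2 :: "nat \<Rightarrow> 'w \<Rightarrow> real"
  assumes P: "prob_space M"
    and f: "fx > 0" "fy > 0"
    and rot: "orthogonal_matrix R" "det R = 1"
    and front: "\<And>i. depth R t (p i) > 0"
    and sig: "\<sigma> \<ge> 0"
    and noise_rv: "\<And>i j. eps i j \<in> borel_measurable M"
    and noise_indep: "prob_space.indep_vars M (\<lambda>_. borel) (\<lambda>(i, j). eps i j) (UNIV \<times> {0, 1})"
    and noise_gauss: "\<sigma> > 0 \<Longrightarrow> \<forall>i j. distributed M lborel (eps i j) (normal_density 0 \<sigma>)"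
    and noise_zero: "\<sigma> = 0 \<Longrightarrow> \<forall>i j. AE w in M. eps i j w = 0"
    and bounded_pts: "bounded (range p)"
    and emp_conv: "\<And>g :: real^3 \<Rightarrow> real. continuous_on UNIV g \<Longrightarrow> bounded (range g) \<Longrightarrow>
                     convergent (\<lambda>n. (\<Sum>i<n. g (p i)) / real n)"
    and BtB_conv: "\<exists>L. ((\<lambda>n. (1 / real n) *\<^sub>R BtB fx fy R t p n) \<longlonglongrightarrow> L) \<and> invertible L"
    and s2_rate: "Op M (\<lambda>n w. sqrt (real n) * \<bar>s2 n w - \<sigma>\<^sup>2\<bar>) (\<lambda>_. 1)"
  shows "Op M (\<lambda>n w. norm ((1 / real n) *\<^sub>R AtA fx fy R t p eps n w - (1 / real n) *\<^sub>R BtB fx fy R t p n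
                             - \<sigma>\<^sup>2 *\<^sub>R ((1 / real n) *\<^sub>R GtG p n))) (\<lambda>n. 1 / sqrt (real n))
       \<and> Op M (\<lambda>n w. norm ((1 / real n) *\<^sub>R Atb fx fy R t p eps n w - (1 / real n) *\<^sub>R Btb fx fy R t p eps n w
                             - \<sigma>\<^sup>2 *\<^sub>R ((1 / real n) *\<^sub>R Gt1 p n))) (\<lambda>n. 1 / sqrt (real n))
       \<and> Op M (\<lambda>n w. norm (thetaBE fx fy R t p eps s2 n w - thetaUB fx fy R t p eps n w)) (\<lambda>n. 1 / sqrt (real n))
       \<and> Op M (\<lambda>n w. norm (thetaBE fx fy R t p eps s2 n w - theta_o R t p n)) (\<lambda>n. 1 / sqrt (real n))"
proof -
  interpret camera_model M \<sigma> eps fx fy R t p s2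
    by (intro camera_model.intro gaussian_noise.intro gaussian_noise_axioms.intro camera_model_axioms.intro P)
      (fact f(1) rot(1) front sig noise_rv noise_indep noise_gauss noise_zero bounded_pts BtB_conv s2_rate)+
  show ?thesis
    using Op_AtA_bias Op_Atb_bias Op_thetaBE_thetaUB Op_thetaBE_theta_o
    unfolding AtA_bias_def Atb_bias_def by blast
qed

end
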